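(* Fix $d \geq 2$. There exists an oriented simplicial complex $P$, depending only on $d$, whose orientation is induced by an ordering of its vertices, such that $H_{d-1}(P)$ is presented as $\langle a, b \mid 2a = b\rangle$, where $a$ and $b$ are coherently represented by a pair of vertex-disjoint $d$-simplex boundaries.
   Context: Homology has integer coefficients. For an oriented simplicial complex $A$ and subcomplex $S$, an ordering of the vertices of $S$ is coherent if the orientation of each face of $S$ induced by it agrees with its orientation in $A$. A class $\gamma \in H_{d-1}(A)$ is coherently represented by the $d$-simplex boundary $Z$ if $Z$ is the boundary of a $d$-simplex embedded in $A$ as an induced subcomplex (the spanned $d$-face is not in $A$), $Z$ has a coherent ordering $v_0,\dots,v_d$, and $\gamma$ is homologous to $\sum_{i=0}^d (-1)^i [v_0,\dots,\hat{v_i},\dots,v_d]$. *)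

theory Defs
  imports Main
begin

text \<open>Finite abstract simplicial complexes on vertex set nat. The orientation of every
simplex is the one induced by the natural order on nat (increasing listing of vertices).\<close>

definition simplicial_complex :: "nat set set \<Rightarrow> bool" where
  "simplicial_complex K \<longleftrightarrow> finite K \<and> (\<forall>\<sigma>\<in>K. finite \<sigma> \<and> \<sigma> \<noteq> {}) \<and>
     (\<forall>\<sigma>\<in>K. \<forall>\<tau>. \<tau> \<subseteq> \<sigma> \<and> \<tau> \<noteq> {} \<longrightarrow> \<tau> \<in> K)"

definition chain :: "nat set set \<Rightarrow> nat \<Rightarrow> (nat set \<Rightarrow> int) \<Rightarrow> bool" where
  "chain K k c \<longleftrightarrow> (\<forall>\<sigma>. c \<sigma> \<noteq> 0 \<longrightarrow> \<sigma> \<in> K \<and> card \<sigma> = Suc k)"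

text \<open>Sign of the face of \<sigma> obtained by deleting v: (-1)^i where v is the i-th vertex
of \<sigma> in increasing order (counting from 0).\<close>

definition face_sign :: "nat set \<Rightarrow> nat \<Rightarrow> int" where
  "face_sign \<sigma> v = (-1) ^ card {w\<in>\<sigma>. w < v}"

text \<open>Simplicial boundary operator: \<partial>[v0,...,vk] = \<Sum> (-1)^i [v0,...,vi^,...,vk].\<close>

definition bd :: "nat set set \<Rightarrow> (nat set \<Rightarrow> int) \<Rightarrow> nat set \<Rightarrow> int" where
  "bd K c \<tau> = (if \<tau> \<in> K then
      (\<Sum>\<sigma>\<in>{\<sigma>\<in>K. \<tau> \<subseteq> \<sigma> \<and> card \<sigma> = Suc (card \<tau>)}. c \<sigma> * face_sign \<sigma> (the_elem (\<sigma> - \<tau>)))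
    else 0)"

definition is_cycle :: "nat set set \<Rightarrow> nat \<Rightarrow> (nat set \<Rightarrow> int) \<Rightarrow> bool" where
  "is_cycle K k z \<longleftrightarrow> chain K k z \<and> bd K z = (\<lambda>_. 0)"

definition is_boundary :: "nat set set \<Rightarrow> nat \<Rightarrow> (nat set \<Rightarrow> int) \<Rightarrow> bool" where
  "is_boundary K k z \<longleftrightarrow> (\<exists>c. chain K (Suc k) c \<and> z = bd K c)"

definition homologous :: "nat set set \<Rightarrow> nat \<Rightarrow> (nat set \<Rightarrow> int) \<Rightarrow> (nat set \<Rightarrow> int) \<Rightarrow> bool" where
  "homologous K k z w \<longleftrightarrow> is_cycle K k z \<and> is_cycle K k w \<and> is_boundary K k (\<lambda>\<tau>. z \<tau> - w \<tau>)"

text \<open>Number of inversions of a list (relative to the order on nat); a listing of a simplex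
induces the same orientation as the increasing listing iff this number is even.\<close>

definition inversions :: "nat list \<Rightarrow> nat" where
  "inversions xs = card {(i, j). i < j \<and> j < length xs \<and> xs ! i > xs ! j}"

text \<open>The elementary chain of the oriented simplex [w0,...,wk] given by a list of distinct
vertices: \<plusminus> the basis element of the simplex set w, sign according to the orientation.\<close>

definition osimplex :: "nat list \<Rightarrow> nat set \<Rightarrow> int" where
  "osimplex ws \<tau> = (if \<tau> = set ws then (-1) ^ inversions ws else 0)"

definition delete_nth :: "nat \<Rightarrow> nat list \<Rightarrow> nat list" where
  "delete_nth i xs = take i xs @ drop (Suc i) xs"

definition alt_bd_chain :: "nat list \<Rightarrow> nat set \<Rightarrow> int" where
  "alt_bd_chain vs \<tau> = (\<Sum>i<length vs. (-1) ^ i * osimplex (delete_nth i vs) \<tau>)"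

definition induced_simplex_boundary :: "nat set set \<Rightarrow> nat \<Rightarrow> nat set \<Rightarrow> bool" where
  "induced_simplex_boundary K d V \<longleftrightarrow> finite V \<and> card V = Suc d \<and> V \<notin> K \<and>
     (\<forall>F. F \<subseteq> V \<and> F \<noteq> {} \<and> F \<noteq> V \<longrightarrow> F \<in> K)"

text \<open>A listing vs of the vertices of the subcomplex S (faces of K contained in set vs) is
coherent if the orientation it induces on each face of S agrees with that of K.\<close>

definition coherent_ordering :: "nat set set \<Rightarrow> nat list \<Rightarrow> bool" where
  "coherent_ordering K vs \<longleftrightarrow> distinct vs \<and>
     (\<forall>F. F \<in> K \<and> F \<subseteq> set vs \<longrightarrow> even (inversions (filter (\<lambda>v. v \<in> F) vs)))"

definition coherently_represented :: "nat set set \<Rightarrow> nat \<Rightarrow> (nat set \<Rightarrow> int) \<Rightarrow> nat list \<Rightarrow> bool" where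
  "coherently_represented K d \<gamma> vs \<longleftrightarrow> length vs = Suc d \<and>
     induced_simplex_boundary K d (set vs) \<and> coherent_ordering K vs \<and>
     homologous K (d - 1) \<gamma> (alt_bd_chain vs)"

text \<open>H_k(K) is presented as <a, b | 2a = b> with a = [za], b = [zb]: za, zb are k-cycles,
their classes generate H_k(K), and the relations among them are exactly the integer
multiples of 2a - b.\<close>

definition presented_2a_eq_b :: "nat set set \<Rightarrow> nat \<Rightarrow> (nat set \<Rightarrow> int) \<Rightarrow> (nat set \<Rightarrow> int) \<Rightarrow> bool" where
  "presented_2a_eq_b K k za zb \<longleftrightarrow> is_cycle K k za \<and> is_cycle K k zb \<and>
     (\<forall>z. is_cycle K k z \<longrightarrow> (\<exists>m n::int. homologous K k z (\<lambda>\<tau>. m * za \<tau> + n * zb \<tau>))) \<and>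
     (\<forall>m n::int. is_boundary K k (\<lambda>\<tau>. m * za \<tau> + n * zb \<tau>) \<longleftrightarrow> (\<exists>j. m = 2 * j \<and> n = - j))"

end

(*
  The complex P has vertices 0, ..., 2d+1.  Its part K avoiding 0 consists of the boundary of the
  d-simplex B = {d+1, ..., 2d+1}, the d-simplex J = {1, ..., d+1}, and two galleries of d-simplices
  (chambers), each chamber spanned by d+1 consecutive vertices of an increasing sequence:
  1, ..., d, d+2, ..., 2d+1 for the first gallery and 1, 3, ..., d+1, d+3, ..., 2d+1 for the second.
  The first gallery runs from the facet {1, ..., d} of J to a facet of B, the second from the facet
  J - {2} to another facet of B.  The walls are the facets through which a gallery enters and leaves
  its chambers.  P is K together with the cone from 0 over the faces of K containing no wall; thus
  A = {0, ..., d}, the cone over the first wall, is an induced simplex boundary, as is B.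

  Coning a (d-1)-cycle from 0 expresses it as a boundary plus cones over walls, and crossing the
  chambers one by one moves the cone over each wall to a multiple of the boundary of A: every
  cycle is homologous to a multiple of it.  The alternating sum of the coefficients on the walls
  is a functional vanishing on all boundaries, with value 1 on the boundary of A and 2 on that
  of B, as both galleries reach B with the same sign.
*)

theory Submission
  imports Defs
begin

section \<open>Boundaries in a full simplex\<close>

definition full_bd :: "nat set \<Rightarrow> (nat set \<Rightarrow> int) \<Rightarrow> nat set \<Rightarrow> int" where
  "full_bd U c \<tau> = (\<Sum>v\<in>U - \<tau>. c (insert v \<tau>) * face_sign (insert v \<tau>) v)"

definition unit_chain :: "nat set \<Rightarrow> nat set \<Rightarrow> int" where
  "unit_chain X = (\<lambda>Y. if Y = X then 1 else 0)"

definition simplex_bd :: "nat set \<Rightarrow> nat set \<Rightarrow> int" where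
  "simplex_bd X = (\<lambda>Y. \<Sum>v\<in>X. if Y = X - {v} then face_sign X v else 0)"

definition cone0 :: "(nat set \<Rightarrow> int) \<Rightarrow> nat set \<Rightarrow> int" where
  "cone0 z = (\<lambda>X. if 0 \<in> X then z (X - {0}) else 0)"

lemma finite_filter_less: "finite {x\<in>X. x < (w::nat)}"
  by (rule finite_subset[of _ "{..<w}"]) auto

lemma face_sign_insert_self: "v \<notin> X \<Longrightarrow> face_sign (insert v X) v = face_sign X v"
proof -
  have "{x\<in>insert v X. x < v} = {x\<in>X. x < v}" by auto
  then show ?thesis unfolding face_sign_def by simp
qed

lemma face_sign_insert_other:
  assumes "v \<notin> X" "w \<noteq> v"
  shows "face_sign (insert v X) w = (if v < w then - face_sign X w else face_sign X w)"
proof (cases "v < w")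
  case True
  have "{x\<in>insert v X. x < w} = insert v {x\<in>X. x < w}" using True by auto
  moreover have "v \<notin> {x\<in>X. x < w}" using assms by auto
  ultimately have "card {x\<in>insert v X. x < w} = Suc (card {x\<in>X. x < w})"
    using finite_filter_less by simp
  then show ?thesis using True unfolding face_sign_def by simp
next
  case False
  then have "{x\<in>insert v X. x < w} = {x\<in>X. x < w}" by auto
  then show ?thesis using False unfolding face_sign_def by simp
qed

lemma face_sign_0 [simp]: "face_sign X 0 = 1"
  unfolding face_sign_def by simp

lemma face_sign_strict_mono_image:
  assumes "strict_mono (f :: nat \<Rightarrow> nat)"
  shows "face_sign (f ` I) (f k) = (-1) ^ card {x\<in>I. x < k}"
proof -
  have "{w\<in>f ` I. w < f k} = f ` {x\<in>I. x < k}"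
    using assms by (auto simp: strict_mono_less)
  moreover have "inj_on f {x\<in>I. x < k}"
    using strict_mono_imp_inj_on[OF assms] by (rule inj_on_subset) (rule subset_UNIV)
  ultimately show ?thesis unfolding face_sign_def by (simp add: card_image)
qed

lemma sum_antisymmetric_offdiag:
  fixes F :: "'a \<Rightarrow> 'a \<Rightarrow> int"
  assumes "finite T" "\<And>v w. v \<in> T \<Longrightarrow> w \<in> T \<Longrightarrow> v \<noteq> w \<Longrightarrow> F w v = - F v w"
  shows "(\<Sum>v\<in>T. \<Sum>w\<in>T - {v}. F v w) = 0"
proof -
  define G where "G v w = (if v \<noteq> w then F v w else 0)" for v w
  have off: "(\<Sum>v\<in>T. \<Sum>w\<in>T - {v}. F v w) = (\<Sum>v\<in>T. \<Sum>w\<in>T. G v w)"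
  proof (rule sum.cong[OF refl])
    fix v assume "v \<in> T"
    then have "(\<Sum>w\<in>T. G v w) = G v v + (\<Sum>w\<in>T - {v}. G v w)"
      using assms(1) by (simp add: sum.remove)
    moreover have "(\<Sum>w\<in>T - {v}. G v w) = (\<Sum>w\<in>T - {v}. F v w)"
      by (intro sum.cong) (auto simp: G_def)
    ultimately show "(\<Sum>w\<in>T - {v}. F v w) = (\<Sum>w\<in>T. G v w)" by (simp add: G_def)
  qed
  have "(\<Sum>v\<in>T. \<Sum>w\<in>T. G v w) = (\<Sum>w\<in>T. \<Sum>v\<in>T. G v w)" by (rule sum.swap)
  also have "\<dots> = (\<Sum>w\<in>T. \<Sum>v\<in>T. - G w v)"
  proof (intro sum.cong refl)
    fix w v assume "w \<in> T" "v \<in> T"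
    then show "G v w = - G w v"
      unfolding G_def by (cases "v = w") (simp_all add: assms(2)[of w v])
  qed
  also have "\<dots> = - (\<Sum>w\<in>T. \<Sum>v\<in>T. G w v)" by (simp add: sum_negf)
  finally show ?thesis using off by simp
qed

lemma sum_mult_delta:
  fixes c :: "'b \<Rightarrow> 'a :: semiring_0"
  assumes "finite J" "\<And>j. j \<in> J \<Longrightarrow> f j = (if j = a then x else 0)"
  shows "(\<Sum>j\<in>J. c j * f j) = (if a \<in> J then c a * x else 0)"
proof -
  have "(\<Sum>j\<in>J. c j * f j) = (\<Sum>j\<in>J. if j = a then c j * x else 0)"
    using assms(2) by (intro sum.cong) auto
  then show ?thesis using assms(1) by simp
qed

lemma sum_mult_two_deltas:
  fixes c :: "'b \<Rightarrow> 'a :: semiring_0"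
  assumes "finite J" "\<And>j. j \<in> J \<Longrightarrow> f j = (if j = a then x else 0) + (if j = b then y else 0)"
  shows "(\<Sum>j\<in>J. c j * f j) = (if a \<in> J then c a * x else 0) + (if b \<in> J then c b * y else 0)"
proof -
  have "(\<Sum>j\<in>J. c j * f j)
      = (\<Sum>j\<in>J. c j * (if j = a then x else 0)) + (\<Sum>j\<in>J. c j * (if j = b then y else 0))"
    using assms(2) by (simp add: distrib_left sum.distrib)
  also have "\<dots> = (if a \<in> J then c a * x else 0) + (if b \<in> J then c b * y else 0)"
    using assms(1) by (simp only: sum_mult_delta)
  finally show ?thesis .
qed

lemma sum_mult_sum_swap:
  fixes c :: "'b \<Rightarrow> 'a :: comm_semiring_0"
  shows "(\<Sum>i\<in>J. c i * (\<Sum>\<sigma>\<in>I. k \<sigma> * g \<sigma> i)) = (\<Sum>\<sigma>\<in>I. k \<sigma> * (\<Sum>i\<in>J. c i * g \<sigma> i))"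
  by (simp add: sum_distrib_left sum.swap[of _ I] mult.left_commute)

lemma full_bd_full_bd:
  assumes "finite U"
  shows "full_bd U (full_bd U c) = (\<lambda>_. 0)"
proof
  fix \<rho>
  define F where "F v w = c (insert w (insert v \<rho>)) * face_sign (insert w (insert v \<rho>)) w
    * face_sign (insert v \<rho>) v" for v w
  have "full_bd U (full_bd U c) \<rho> = (\<Sum>v\<in>U - \<rho>. \<Sum>w\<in>U - \<rho> - {v}. F v w)"
    unfolding full_bd_def F_def
  proof (intro sum.cong refl)
    fix v assume "v \<in> U - \<rho>"
    have "U - insert v \<rho> = U - \<rho> - {v}" by auto
    then show "(\<Sum>w\<in>U - insert v \<rho>. c (insert w (insert v \<rho>)) * face_sign (insert w (insert v \<rho>)) w)
        * face_sign (insert v \<rho>) v = (\<Sum>w\<in>U - \<rho> - {v}. c (insert w (insert v \<rho>))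
        * face_sign (insert w (insert v \<rho>)) w * face_sign (insert v \<rho>) v)"
      by (simp add: sum_distrib_right)
  qed
  also have "\<dots> = 0"
  proof (rule sum_antisymmetric_offdiag)
    fix v w assume vw: "v \<in> U - \<rho>" "w \<in> U - \<rho>" "v \<noteq> w"
    have swap: "insert v (insert w \<rho>) = insert w (insert v \<rho>)" by auto
    have "F v w = c (insert w (insert v \<rho>)) * (if v < w then - face_sign \<rho> w else face_sign \<rho> w)
        * face_sign \<rho> v"
      unfolding F_def using vw by (simp add: face_sign_insert_other face_sign_insert_self)
    moreover have "F w v = c (insert w (insert v \<rho>)) * (if w < v then - face_sign \<rho> v else face_sign \<rho> v)
        * face_sign \<rho> w"
      unfolding F_def using vw swap by (simp add: face_sign_insert_other face_sign_insert_self)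
    ultimately show "F w v = - F v w" using vw by auto
  qed (use assms in simp)
  finally show "full_bd U (full_bd U c) \<rho> = 0" .
qed

lemma full_bd_add: "full_bd U (\<lambda>\<sigma>. a \<sigma> + b \<sigma>) = (\<lambda>\<tau>. full_bd U a \<tau> + full_bd U b \<tau>)"
  unfolding full_bd_def by (simp add: distrib_right sum.distrib)

lemma full_bd_sum_unit_chains:
  assumes "finite U" "\<And>i. i \<in> I \<Longrightarrow> X i \<subseteq> U"
  shows "full_bd U (\<lambda>Y. \<Sum>i\<in>I. a i * unit_chain (X i) Y) = (\<lambda>\<tau>. \<Sum>i\<in>I. a i * simplex_bd (X i) \<tau>)"
proof
  fix \<tau>
  have "full_bd U (\<lambda>Y. \<Sum>i\<in>I. a i * unit_chain (X i) Y) \<tau>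
      = (\<Sum>i\<in>I. a i * (\<Sum>v\<in>U - \<tau>. unit_chain (X i) (insert v \<tau>) * face_sign (insert v \<tau>) v))"
    unfolding full_bd_def sum_distrib_left sum_distrib_right
    by (subst sum.swap) (simp add: mult.assoc)
  also have "\<dots> = (\<Sum>i\<in>I. a i * simplex_bd (X i) \<tau>)"
  proof (intro sum.cong refl arg_cong[where f = "(*) (a _)"])
    fix i assume "i \<in> I"
    have "(\<Sum>v\<in>U - \<tau>. unit_chain (X i) (insert v \<tau>) * face_sign (insert v \<tau>) v)
        = (\<Sum>v\<in>U. if v \<notin> \<tau> \<and> insert v \<tau> = X i then face_sign (X i) v else 0)"
      unfolding unit_chain_def using assms(1) by (intro sum.mono_neutral_cong_left) auto
    also have "\<dots> = (\<Sum>v\<in>U. if v \<in> X i \<and> \<tau> = X i - {v} then face_sign (X i) v else 0)"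
      by (intro sum.cong refl) auto
    also have "\<dots> = simplex_bd (X i) \<tau>"
      unfolding simplex_bd_def using assms \<open>i \<in> I\<close> by (intro sum.mono_neutral_cong_right) auto
    finally show "(\<Sum>v\<in>U - \<tau>. unit_chain (X i) (insert v \<tau>) * face_sign (insert v \<tau>) v)
        = simplex_bd (X i) \<tau>" .
  qed
  finally show "full_bd U (\<lambda>Y. \<Sum>i\<in>I. a i * unit_chain (X i) Y) \<tau> = (\<Sum>i\<in>I. a i * simplex_bd (X i) \<tau>)" .
qed

lemma full_bd_unit_chain:
  assumes "finite U" "X \<subseteq> U"
  shows "full_bd U (unit_chain X) = simplex_bd X"
proof -
  have "full_bd U (\<lambda>Y. \<Sum>i\<in>{()}. 1 * unit_chain X Y) = (\<lambda>\<tau>. \<Sum>i\<in>{()}. 1 * simplex_bd X \<tau>)"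
    using assms by (intro full_bd_sum_unit_chains)
  then show ?thesis by simp
qed

lemma sum_unit_chain_insert_0:
  assumes "finite I" "inj_on W I" "\<And>i. i \<in> I \<Longrightarrow> 0 \<notin> W i" "0 \<notin> G"
  shows "(\<Sum>i\<in>I. z (W i) * unit_chain (insert 0 (W i)) (insert 0 G)) = (if G \<in> W ` I then z G else 0)"
proof -
  have "(\<Sum>i\<in>I. z (W i) * unit_chain (insert 0 (W i)) (insert 0 G)) = (\<Sum>i\<in>I. if W i = G then z G else 0)"
    using assms(3,4) unfolding unit_chain_def by (intro sum.cong refl) (simp add: insert_ident)
  also have "\<dots> = (\<Sum>H\<in>W ` I. if H = G then z G else 0)"
    using assms(2) by (simp add: sum.reindex)
  also have "\<dots> = (if G \<in> W ` I then z G else 0)" using assms(1) by (simp add: sum.delta')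
  finally show ?thesis .
qed

lemma simplex_bd_facet:
  assumes "finite X" "v \<in> X"
  shows "simplex_bd X (X - {v}) = face_sign X v"
proof -
  have "simplex_bd X (X - {v}) = (\<Sum>w\<in>X. if w = v then face_sign X w else 0)"
    unfolding simplex_bd_def using assms by (intro sum.cong refl) auto
  then show ?thesis using assms by simp
qed

lemma simplex_bd_eq_0:
  assumes "finite X" "\<not> (Y \<subseteq> X \<and> Suc (card Y) = card X)"
  shows "simplex_bd X Y = 0"
  unfolding simplex_bd_def
proof (intro sum.neutral ballI)
  fix v assume "v \<in> X"
  then have "Suc (card (X - {v})) = card X" using assms(1) by (intro card_Suc_Diff1)
  then show "(if Y = X - {v} then face_sign X v else 0) = 0" using assms(2) by auto
qed

lemma simplex_bd_nonzero_imp_facet: "simplex_bd X \<tau> \<noteq> 0 \<Longrightarrow> \<exists>v\<in>X. \<tau> = X - {v}"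
proof (rule ccontr)
  assume "simplex_bd X \<tau> \<noteq> 0" "\<not> (\<exists>v\<in>X. \<tau> = X - {v})"
  moreover from this(2) have "simplex_bd X \<tau> = 0"
    unfolding simplex_bd_def by (intro sum.neutral) auto
  ultimately show False by simp
qed

lemma full_bd_cone0:
  assumes "finite U" "0 \<in> U" "full_bd U z = (\<lambda>_. 0)"
  shows "full_bd U (cone0 z) = z"
proof
  fix \<tau>
  show "full_bd U (cone0 z) \<tau> = z \<tau>"
  proof (cases "0 \<in> \<tau>")
    case False
    have "full_bd U (cone0 z) \<tau> = cone0 z (insert 0 \<tau>) * face_sign (insert 0 \<tau>) 0 +
        (\<Sum>v\<in>U - \<tau> - {0}. cone0 z (insert v \<tau>) * face_sign (insert v \<tau>) v)"
      unfolding full_bd_def using assms False by (simp add: sum.remove)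
    also have "(\<Sum>v\<in>U - \<tau> - {0}. cone0 z (insert v \<tau>) * face_sign (insert v \<tau>) v) = 0"
      using False by (intro sum.neutral) (auto simp: cone0_def)
    finally show ?thesis using False by (simp add: cone0_def)
  next
    case True
    define \<rho> where "\<rho> = \<tau> - {0}"
    have \<tau>: "\<tau> = insert 0 \<rho>" "0 \<notin> \<rho>" using True by (auto simp: \<rho>_def)
    have U: "U - \<rho> = insert 0 (U - \<tau>)" "0 \<notin> U - \<tau>" using \<tau> assms(2) by auto
    have "0 = full_bd U z \<rho>" using assms(3) by simp
    also have "\<dots> = z \<tau> + (\<Sum>v\<in>U - \<tau>. z (insert v \<rho>) * face_sign (insert v \<rho>) v)"
      unfolding full_bd_def U(1) using U(2) assms(1) \<tau> by simp
    finally have cycle: "(\<Sum>v\<in>U - \<tau>. z (insert v \<rho>) * face_sign (insert v \<rho>) v) = - z \<tau>"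
      by simp
    have "full_bd U (cone0 z) \<tau> = (\<Sum>v\<in>U - \<tau>. - (z (insert v \<rho>) * face_sign (insert v \<rho>) v))"
      unfolding full_bd_def
    proof (intro sum.cong refl)
      fix v assume v: "v \<in> U - \<tau>"
      then have v0: "v \<noteq> 0" "v \<notin> \<rho>" using \<tau> by auto
      have "insert v \<tau> - {0} = insert v \<rho>" using \<tau> v0 by auto
      moreover have "face_sign (insert v \<tau>) v = - face_sign (insert v \<rho>) v"
        unfolding \<tau> using v0 \<tau>(2) by (simp add: insert_commute[of v 0] face_sign_insert_other)
      ultimately show "cone0 z (insert v \<tau>) * face_sign (insert v \<tau>) v
          = - (z (insert v \<rho>) * face_sign (insert v \<rho>) v)"
        using \<tau> by (simp add: cone0_def)
    qed
    also have "\<dots> = z \<tau>" using cycle by (simp add: sum_negf)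
    finally show ?thesis .
  qed
qed

text \<open>The identity \<open>\<partial>\<sigma> = \<partial>(0 * \<partial>\<sigma>)\<close>, where \<open>0 * _\<close> is the cone from the vertex 0.\<close>

lemma simplex_bd_cone_expansion:
  assumes "finite \<sigma>" "0 \<notin> \<sigma>"
  shows "simplex_bd \<sigma> = (\<lambda>\<tau>. \<Sum>v\<in>\<sigma>. face_sign \<sigma> v * simplex_bd (insert 0 (\<sigma> - {v})) \<tau>)"
proof -
  define U where "U = insert 0 \<sigma>"
  have U: "finite U" "0 \<in> U" "\<sigma> \<subseteq> U" using assms(1) by (auto simp: U_def)
  have cycle: "full_bd U (simplex_bd \<sigma>) = (\<lambda>_. 0)"
    using full_bd_unit_chain[OF U(1,3)] full_bd_full_bd[OF U(1)] by metis
  have cone: "cone0 (simplex_bd \<sigma>) = (\<lambda>X. \<Sum>v\<in>\<sigma>. face_sign \<sigma> v * unit_chain (insert 0 (\<sigma> - {v})) X)"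
  proof
    fix X
    have "cone0 (simplex_bd \<sigma>) X
        = (\<Sum>v\<in>\<sigma>. if 0 \<in> X \<and> X - {0} = \<sigma> - {v} then face_sign \<sigma> v else 0)"
      unfolding cone0_def simplex_bd_def by (cases "0 \<in> X") auto
    also have "\<dots> = (\<Sum>v\<in>\<sigma>. face_sign \<sigma> v * unit_chain (insert 0 (\<sigma> - {v})) X)"
    proof (intro sum.cong refl)
      fix v assume "v \<in> \<sigma>"
      have "(0 \<in> X \<and> X - {0} = \<sigma> - {v}) \<longleftrightarrow> X = insert 0 (\<sigma> - {v})"
        using assms(2) by auto
      then show "(if 0 \<in> X \<and> X - {0} = \<sigma> - {v} then face_sign \<sigma> v else 0) =
          face_sign \<sigma> v * unit_chain (insert 0 (\<sigma> - {v})) X" unfolding unit_chain_def by simp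
    qed
    finally show "cone0 (simplex_bd \<sigma>) X
        = (\<Sum>v\<in>\<sigma>. face_sign \<sigma> v * unit_chain (insert 0 (\<sigma> - {v})) X)" .
  qed
  have "simplex_bd \<sigma> = full_bd U (cone0 (simplex_bd \<sigma>))"
    using full_bd_cone0[OF U(1,2) cycle] by (rule sym)
  also have "\<dots> = (\<lambda>\<tau>. \<Sum>v\<in>\<sigma>. face_sign \<sigma> v * simplex_bd (insert 0 (\<sigma> - {v})) \<tau>)"
    unfolding cone using U
    by (intro full_bd_sum_unit_chains[of U \<sigma> "\<lambda>v. insert 0 (\<sigma> - {v})" "face_sign \<sigma>"]) auto
  finally show ?thesis .
qed

section \<open>Chains and boundaries of a simplicial complex\<close>

lemma simplicial_complex_finite_simplex:
  "simplicial_complex K \<Longrightarrow> \<sigma> \<in> K \<Longrightarrow> finite \<sigma>"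
  unfolding simplicial_complex_def by blast

lemma simplicial_complex_face:
  "simplicial_complex K \<Longrightarrow> \<sigma> \<in> K \<Longrightarrow> \<tau> \<subseteq> \<sigma> \<Longrightarrow> \<tau> \<noteq> {} \<Longrightarrow> \<tau> \<in> K"
  unfolding simplicial_complex_def by blast

lemma simplicial_complex_finite_vertices: "simplicial_complex K \<Longrightarrow> finite (\<Union>K)"
  unfolding simplicial_complex_def by blast

lemma cofacets_eq_image_insert:
  assumes K: "simplicial_complex K" and U: "\<Union>K \<subseteq> U" and \<tau>: "\<tau> \<in> K"
  shows "{\<sigma>\<in>K. \<tau> \<subseteq> \<sigma> \<and> card \<sigma> = Suc (card \<tau>)} = (\<lambda>v. insert v \<tau>) ` {v\<in>U - \<tau>. insert v \<tau> \<in> K}"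
proof (intro set_eqI iffI)
  have ft: "finite \<tau>" using K \<tau> by (rule simplicial_complex_finite_simplex)
  fix \<sigma> assume "\<sigma> \<in> {\<sigma>\<in>K. \<tau> \<subseteq> \<sigma> \<and> card \<sigma> = Suc (card \<tau>)}"
  then have \<sigma>: "\<sigma> \<in> K" "\<tau> \<subseteq> \<sigma>" "card \<sigma> = Suc (card \<tau>)" by auto
  then have "finite \<sigma>" using K simplicial_complex_finite_simplex by blast
  then have "card (\<sigma> - \<tau>) = 1" using \<sigma> ft by (simp add: card_Diff_subset)
  then obtain v where v: "\<sigma> - \<tau> = {v}" by (auto simp: card_Suc_eq)
  then have "\<sigma> = insert v \<tau>" using \<sigma> by auto
  moreover have "v \<in> U - \<tau>" using v \<sigma> U by auto
  ultimately show "\<sigma> \<in> (\<lambda>v. insert v \<tau>) ` {v\<in>U - \<tau>. insert v \<tau> \<in> K}" using \<sigma>(1) by auto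
next
  have ft: "finite \<tau>" using K \<tau> by (rule simplicial_complex_finite_simplex)
  fix \<sigma> assume "\<sigma> \<in> (\<lambda>v. insert v \<tau>) ` {v\<in>U - \<tau>. insert v \<tau> \<in> K}"
  then show "\<sigma> \<in> {\<sigma>\<in>K. \<tau> \<subseteq> \<sigma> \<and> card \<sigma> = Suc (card \<tau>)}" using ft by auto
qed

lemma bd_eq_full_bd:
  assumes K: "simplicial_complex K" and U: "finite U" "\<Union>K \<subseteq> U"
    and c: "chain K k c" and k: "1 \<le> k"
  shows "bd K c = full_bd U c"
proof
  fix \<tau>
  show "bd K c \<tau> = full_bd U c \<tau>"
  proof (cases "\<tau> \<in> K")
    case True
    define V where "V = {v\<in>U - \<tau>. insert v \<tau> \<in> K}"
    have "inj_on (\<lambda>v. insert v \<tau>) V" unfolding V_def inj_on_def by auto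
    then have "bd K c \<tau>
        = (\<Sum>v\<in>V. c (insert v \<tau>) * face_sign (insert v \<tau>) (the_elem (insert v \<tau> - \<tau>)))"
      unfolding bd_def V_def cofacets_eq_image_insert[OF K U(2) True] using True
      by (simp add: sum.reindex)
    also have "\<dots> = (\<Sum>v\<in>V. c (insert v \<tau>) * face_sign (insert v \<tau>) v)"
      unfolding V_def by (intro sum.cong refl) (auto simp: insert_Diff_if)
    also have "\<dots> = full_bd U c \<tau>"
      unfolding full_bd_def
    proof (rule sum.mono_neutral_cong_left)
      show "\<forall>v\<in>U - \<tau> - V. c (insert v \<tau>) * face_sign (insert v \<tau>) v = 0"
        using c unfolding V_def chain_def by auto
    qed (use U in \<open>auto simp: V_def\<close>)
    finally show ?thesis .
  next
    case False
    have "c (insert v \<tau>) = 0" for v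
    proof (rule ccontr)
      assume "c (insert v \<tau>) \<noteq> 0"
      then have "insert v \<tau> \<in> K" "card (insert v \<tau>) = Suc k" using c unfolding chain_def by auto
      moreover from this have "\<tau> \<noteq> {}" using k by auto
      ultimately have "\<tau> \<in> K" using K simplicial_complex_face by blast
      then show False using False by simp
    qed
    then show ?thesis using False unfolding bd_def full_bd_def by simp
  qed
qed

lemma bd_add: "bd K (\<lambda>\<sigma>. a \<sigma> + b \<sigma>) = (\<lambda>\<tau>. bd K a \<tau> + bd K b \<tau>)"
  unfolding bd_def by (intro ext) (simp add: distrib_right sum.distrib)

lemma bd_scale: "bd K (\<lambda>\<sigma>. m * a \<sigma>) = (\<lambda>\<tau>. m * bd K a \<tau>)"
  unfolding bd_def by (intro ext) (simp add: sum_distrib_left mult.assoc)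

lemma bd_sum: "bd K (\<lambda>\<sigma>. \<Sum>i\<in>I. f i \<sigma>) = (\<lambda>\<tau>. \<Sum>i\<in>I. bd K (f i) \<tau>)"
  unfolding bd_def by (intro ext) (simp add: sum_distrib_right sum.swap[of _ I])

lemma chain_add: "chain K k a \<Longrightarrow> chain K k b \<Longrightarrow> chain K k (\<lambda>\<sigma>. a \<sigma> + b \<sigma>)"
  unfolding chain_def by (metis add.right_neutral)

lemma chain_scale: "chain K k a \<Longrightarrow> chain K k (\<lambda>\<sigma>. m * a \<sigma>)"
  unfolding chain_def by auto

lemma chain_sum: "(\<And>i. i \<in> I \<Longrightarrow> chain K k (f i)) \<Longrightarrow> chain K k (\<lambda>\<sigma>. \<Sum>i\<in>I. f i \<sigma>)"
  unfolding chain_def by (metis (mono_tags, lifting) sum.neutral)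

lemma chain_unit_chain: "\<sigma> \<in> K \<Longrightarrow> card \<sigma> = Suc k \<Longrightarrow> chain K k (unit_chain \<sigma>)"
  unfolding chain_def unit_chain_def by auto

lemma chain_unit_expansion:
  assumes "finite K" "chain K k c"
  shows "c = (\<lambda>\<tau>. \<Sum>\<sigma>\<in>{\<sigma>\<in>K. card \<sigma> = Suc k}. c \<sigma> * unit_chain \<sigma> \<tau>)"
proof
  fix \<tau>
  have "(\<Sum>\<sigma>\<in>{\<sigma>\<in>K. card \<sigma> = Suc k}. c \<sigma> * unit_chain \<sigma> \<tau>)
      = (\<Sum>\<sigma>\<in>{\<sigma>\<in>K. card \<sigma> = Suc k}. if \<sigma> = \<tau> then c \<tau> else 0)"
    unfolding unit_chain_def by (intro sum.cong refl) auto
  also have "\<dots> = c \<tau>" using assms unfolding chain_def by auto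
  finally show "c \<tau> = (\<Sum>\<sigma>\<in>{\<sigma>\<in>K. card \<sigma> = Suc k}. c \<sigma> * unit_chain \<sigma> \<tau>)" by simp
qed

lemma bd_chain_expansion:
  assumes K: "simplicial_complex K" and c: "chain K (Suc k) c"
  shows "bd K c = (\<lambda>\<tau>. \<Sum>\<sigma>\<in>{\<sigma>\<in>K. card \<sigma> = Suc (Suc k)}. c \<sigma> * simplex_bd \<sigma> \<tau>)"
proof -
  have "finite K" using K unfolding simplicial_complex_def by blast
  then have "bd K c = full_bd (\<Union>K) (\<lambda>\<tau>. \<Sum>\<sigma>\<in>{\<sigma>\<in>K. card \<sigma> = Suc (Suc k)}. c \<sigma> * unit_chain \<sigma> \<tau>)"
    using bd_eq_full_bd[OF K simplicial_complex_finite_vertices[OF K] subset_refl c]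
      chain_unit_expansion[OF _ c] by simp
  also have "\<dots> = (\<lambda>\<tau>. \<Sum>\<sigma>\<in>{\<sigma>\<in>K. card \<sigma> = Suc (Suc k)}. c \<sigma> * simplex_bd \<sigma> \<tau>)"
    using simplicial_complex_finite_vertices[OF K] by (intro full_bd_sum_unit_chains) auto
  finally show ?thesis .
qed

lemma bd_unit_chain:
  assumes "simplicial_complex K" "\<sigma> \<in> K" "card \<sigma> = Suc (Suc k)"
  shows "bd K (unit_chain \<sigma>) = simplex_bd \<sigma>"
proof -
  have "bd K (unit_chain \<sigma>) = full_bd (\<Union>K) (unit_chain \<sigma>)"
    using assms simplicial_complex_finite_vertices
    by (intro bd_eq_full_bd chain_unit_chain) auto
  also have "\<dots> = simplex_bd \<sigma>"
    using assms simplicial_complex_finite_vertices by (intro full_bd_unit_chain) auto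
  finally show ?thesis .
qed

lemma is_boundary_zero: "is_boundary K k (\<lambda>_. 0)"
  unfolding is_boundary_def by (auto intro!: exI[of _ "\<lambda>_. 0"] simp: chain_def bd_def)

lemma is_boundary_add:
  "is_boundary K k x \<Longrightarrow> is_boundary K k y \<Longrightarrow> is_boundary K k (\<lambda>\<tau>. x \<tau> + y \<tau>)"
  unfolding is_boundary_def using chain_add bd_add by metis

lemma is_boundary_scale: "is_boundary K k x \<Longrightarrow> is_boundary K k (\<lambda>\<tau>. m * x \<tau>)"
  unfolding is_boundary_def using chain_scale bd_scale by metis

lemma is_boundary_lincomb:
  "is_boundary K k x \<Longrightarrow> is_boundary K k y \<Longrightarrow> is_boundary K k (\<lambda>\<tau>. a * x \<tau> + b * y \<tau>)"
  using is_boundary_add is_boundary_scale by blast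

lemma is_boundary_sum:
  assumes "\<And>i. i \<in> I \<Longrightarrow> is_boundary K k (f i)"
  shows "is_boundary K k (\<lambda>\<tau>. \<Sum>i\<in>I. f i \<tau>)"
proof -
  obtain c where c: "\<And>i. i \<in> I \<Longrightarrow> chain K (Suc k) (c i) \<and> f i = bd K (c i)"
    using assms unfolding is_boundary_def by metis
  then have "chain K (Suc k) (\<lambda>\<sigma>. \<Sum>i\<in>I. c i \<sigma>)" by (intro chain_sum) blast
  moreover have "(\<lambda>\<tau>. \<Sum>i\<in>I. f i \<tau>) = bd K (\<lambda>\<sigma>. \<Sum>i\<in>I. c i \<sigma>)"
    unfolding bd_sum using c by (intro ext sum.cong) auto
  ultimately show ?thesis unfolding is_boundary_def by blast
qed

lemma is_boundary_simplex_bd: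
  assumes "simplicial_complex K" "\<sigma> \<in> K" "card \<sigma> = Suc (Suc k)"
  shows "is_boundary K k (simplex_bd \<sigma>)"
  unfolding is_boundary_def using assms bd_unit_chain chain_unit_chain by metis

lemma is_cycle_lincomb:
  "is_cycle K k x \<Longrightarrow> is_cycle K k y \<Longrightarrow> is_cycle K k (\<lambda>\<tau>. a * x \<tau> + b * y \<tau>)"
  unfolding is_cycle_def using chain_add chain_scale bd_add bd_scale by (metis mult_zero_right add_0)

lemma is_cycle_simplex_bd:
  assumes K: "simplicial_complex K" and X: "finite X" "card X = Suc (Suc k)" and k: "1 \<le> k"
    and facets: "\<And>v. v \<in> X \<Longrightarrow> X - {v} \<in> K"
  shows "is_cycle K k (simplex_bd X)"
proof -
  have ch: "chain K k (simplex_bd X)"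
    unfolding chain_def using facets X simplex_bd_nonzero_imp_facet by fastforce
  have "X \<subseteq> \<Union>K"
  proof
    fix v assume "v \<in> X"
    have "card (X - {v}) = Suc k" using X \<open>v \<in> X\<close> by simp
    then have "X - {v} \<noteq> {}" by (metis card.empty nat.distinct(1))
    then obtain w where "w \<in> X" "w \<noteq> v" by blast
    then show "v \<in> \<Union>K" using facets[of w] \<open>v \<in> X\<close> by blast
  qed
  then have "bd K (simplex_bd X) = full_bd (\<Union>K) (full_bd (\<Union>K) (unit_chain X))"
    using bd_eq_full_bd[OF K simplicial_complex_finite_vertices[OF K] subset_refl ch k]
      full_bd_unit_chain simplicial_complex_finite_vertices[OF K] by simp
  then show ?thesis
    using ch full_bd_full_bd simplicial_complex_finite_vertices[OF K] unfolding is_cycle_def by simp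
qed

lemma homologous_refl: "is_cycle K k z \<Longrightarrow> homologous K k z z"
  unfolding homologous_def is_boundary_def
  by (auto intro!: exI[of _ "\<lambda>_. 0"] simp: chain_def bd_def)

text \<open>Expanding \<open>\<partial>\<sigma>\<close> by coning from 0, all terms but the two over x and y are boundaries in K.\<close>

lemma is_boundary_two_cone_facets:
  assumes K: "simplicial_complex K" and \<sigma>: "\<sigma> \<in> K" "0 \<notin> \<sigma>" "card \<sigma> = Suc (Suc k)"
    and xy: "x \<in> \<sigma>" "y \<in> \<sigma>" "x \<noteq> y"
    and cones: "\<And>v. v \<in> \<sigma> \<Longrightarrow> v \<noteq> x \<Longrightarrow> v \<noteq> y \<Longrightarrow> insert 0 (\<sigma> - {v}) \<in> K"
  shows "is_boundary K k (\<lambda>\<tau>. face_sign \<sigma> x * simplex_bd (insert 0 (\<sigma> - {x})) \<tau>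
    + face_sign \<sigma> y * simplex_bd (insert 0 (\<sigma> - {y})) \<tau>)"
proof -
  have fin: "finite \<sigma>" using K \<sigma>(1) by (rule simplicial_complex_finite_simplex)
  define T where "T v \<tau> = face_sign \<sigma> v * simplex_bd (insert 0 (\<sigma> - {v})) \<tau>" for v \<tau>
  have split: "(\<Sum>v\<in>\<sigma>. T v \<tau>) = T x \<tau> + T y \<tau> + (\<Sum>v\<in>\<sigma> - {x} - {y}. T v \<tau>)" for \<tau>
  proof -
    have "(\<Sum>v\<in>\<sigma>. T v \<tau>) = T x \<tau> + (\<Sum>v\<in>\<sigma> - {x}. T v \<tau>)" using fin xy by (simp add: sum.remove)
    also have "(\<Sum>v\<in>\<sigma> - {x}. T v \<tau>) = T y \<tau> + (\<Sum>v\<in>\<sigma> - {x} - {y}. T v \<tau>)"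
      using fin xy by (intro sum.remove) auto
    finally show ?thesis by simp
  qed
  have rest: "is_boundary K k (\<lambda>\<tau>. \<Sum>v\<in>\<sigma> - {x} - {y}. T v \<tau>)"
  proof (rule is_boundary_sum)
    fix v assume v: "v \<in> \<sigma> - {x} - {y}"
    then have "card (insert 0 (\<sigma> - {v})) = Suc (Suc k)" using \<sigma> fin by simp
    then show "is_boundary K k (T v)"
      unfolding T_def using v by (intro is_boundary_scale is_boundary_simplex_bd[OF K] cones) auto
  qed
  have "is_boundary K k (\<lambda>\<tau>. 1 * simplex_bd \<sigma> \<tau> + (- 1) * (\<Sum>v\<in>\<sigma> - {x} - {y}. T v \<tau>))"
    by (intro is_boundary_lincomb is_boundary_simplex_bd[OF K \<sigma>(1,3)] rest)
  moreover have "simplex_bd \<sigma> \<tau> = (\<Sum>v\<in>\<sigma>. T v \<tau>)" for \<tau>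
    using simplex_bd_cone_expansion[OF fin \<sigma>(2)] unfolding T_def by metis
  ultimately show ?thesis using split unfolding T_def by simp
qed

lemma is_boundary_telescope:
  assumes "a \<le> b" "\<And>i. a \<le> i \<Longrightarrow> i < b \<Longrightarrow> is_boundary K k (\<lambda>\<tau>. x (Suc i) \<tau> - s * x i \<tau>)"
  shows "is_boundary K k (\<lambda>\<tau>. x b \<tau> - s ^ (b - a) * x a \<tau>)"
  using assms
proof (induction b rule: dec_induct)
  case base
  show ?case using is_boundary_zero by simp
next
  case (step b)
  have "is_boundary K k (\<lambda>\<tau>. 1 * (x (Suc b) \<tau> - s * x b \<tau>) + s * (x b \<tau> - s ^ (b - a) * x a \<tau>))"
    using step by (intro is_boundary_lincomb) auto
  moreover have "Suc b - a = Suc (b - a)" using step.hyps(1) by simp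
  ultimately show ?case by (simp add: algebra_simps)
qed

section \<open>Strips of simplices\<close>

definition strip_simplex :: "(nat \<Rightarrow> nat) \<Rightarrow> nat \<Rightarrow> nat \<Rightarrow> nat set" where
  "strip_simplex f d i = f ` {i..i+d}"

definition strip_facet :: "(nat \<Rightarrow> nat) \<Rightarrow> nat \<Rightarrow> nat \<Rightarrow> nat set" where
  "strip_facet f d i = f ` {i..<i+d}"

lemma finite_strip_simplex [simp]: "finite (strip_simplex f d i)"
  unfolding strip_simplex_def by simp

context
  fixes f :: "nat \<Rightarrow> nat" and d :: nat
  assumes f: "strict_mono f"
begin

lemma card_strip_simplex: "card (strip_simplex f d i) = Suc d"
  unfolding strip_simplex_def using strict_mono_imp_inj_on[OF f]
  by (simp add: card_image inj_on_subset)

lemma card_strip_facet: "card (strip_facet f d i) = d"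
  unfolding strip_facet_def using strict_mono_imp_inj_on[OF f]
  by (simp add: card_image inj_on_subset)

lemma strip_facet_eq_Diff:
  "strip_facet f d i = strip_simplex f d i - {f (i + d)}"
  "strip_facet f d (Suc i) = strip_simplex f d i - {f i}"
proof -
  have "inj f" using f by (rule strict_mono_imp_inj_on)
  then have "f ` A - {f k} = f ` (A - {k})" for A k by (auto simp: inj_eq)
  moreover have "{i..i+d} - {i+d} = {i..<i+d}" "{i..i+d} - {i} = {Suc i..<Suc i+d}" by auto
  ultimately show "strip_facet f d i = strip_simplex f d i - {f (i + d)}"
    "strip_facet f d (Suc i) = strip_simplex f d i - {f i}"
    unfolding strip_facet_def strip_simplex_def by metis+
qed

lemma strip_vertices_in_strip_simplex: "f (i + d) \<in> strip_simplex f d i" "f i \<in> strip_simplex f d i"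
  unfolding strip_simplex_def by auto

lemma face_sign_strip_simplex:
  "face_sign (strip_simplex f d i) (f (i + d)) = (-1) ^ d"
  "face_sign (strip_simplex f d i) (f i) = 1"
proof -
  have last: "{x\<in>{i..i+d}. x < i + d} = {i..<i+d}" and first: "{x\<in>{i..i+d}. x < i} = {}"
    by auto
  show "face_sign (strip_simplex f d i) (f (i + d)) = (-1) ^ d"
    unfolding strip_simplex_def face_sign_strict_mono_image[OF f] last by simp
  show "face_sign (strip_simplex f d i) (f i) = 1"
    unfolding strip_simplex_def face_sign_strict_mono_image[OF f] first by simp
qed

context
  assumes d: "1 \<le> d"
begin

lemma strip_facet_subset_strip_simplex_iff:
  "strip_facet f d j \<subseteq> strip_simplex f d i \<longleftrightarrow> j = i \<or> j = Suc i"
proof -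
  have "{j..<j+d} \<subseteq> {i..i+d} \<longleftrightarrow> j = i \<or> j = Suc i"
  proof
    assume sub: "{j..<j+d} \<subseteq> {i..i+d}"
    have "j \<in> {j..<j+d}" "j + d - 1 \<in> {j..<j+d}" using d by auto
    then have "i \<le> j" "j + d - 1 \<le> i + d" using sub by (auto simp del: atLeastLessThan_iff)
    then show "j = i \<or> j = Suc i" using d by linarith
  qed auto
  then show ?thesis unfolding strip_facet_def strip_simplex_def
    using inj_image_subset_iff[OF strict_mono_imp_inj_on[OF f]] by simp
qed

lemma strip_facet_inj: "strip_facet f d i = strip_facet f d j \<Longrightarrow> i = j"
  using strip_facet_subset_strip_simplex_iff[of i j] strip_facet_subset_strip_simplex_iff[of j i]
    strip_facet_eq_Diff(1)[of i] strip_facet_eq_Diff(1)[of j] by force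

lemma simplex_bd_strip_simplex:
  "simplex_bd (strip_simplex f d i) (strip_facet f d j)
    = (if j = i then (-1) ^ d else 0) + (if j = Suc i then 1 else 0)"
proof -
  consider "j = i" | "j = Suc i" | "\<not> strip_facet f d j \<subseteq> strip_simplex f d i"
    using strip_facet_subset_strip_simplex_iff by blast
  then show ?thesis
  proof cases
    case 1
    then show ?thesis using simplex_bd_facet strip_vertices_in_strip_simplex(1)
      by (simp add: strip_facet_eq_Diff(1) face_sign_strip_simplex(1))
  next
    case 2
    then show ?thesis using simplex_bd_facet strip_vertices_in_strip_simplex(2)
      by (simp add: strip_facet_eq_Diff(2) face_sign_strip_simplex(2))
  next
    case 3
    then show ?thesis using simplex_bd_eq_0 strip_facet_subset_strip_simplex_iff by simp
  qed
qed

end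

end

section \<open>Simplices listed in increasing order\<close>

lemma inversions_sorted:
  assumes "sorted xs"
  shows "inversions xs = 0"
proof -
  have "{(i, j). i < j \<and> j < length xs \<and> xs ! i > xs ! j} = {}"
  proof (rule equals0I)
    fix p assume "p \<in> {(i, j). i < j \<and> j < length xs \<and> xs ! i > xs ! j}"
    then obtain i j where "i < j" "j < length xs" "xs ! i > xs ! j" by blast
    then show False using sorted_nth_mono[OF assms, of i j] by simp
  qed
  then show ?thesis unfolding inversions_def by (simp only: card.empty)
qed

lemma alt_bd_chain_upt: "alt_bd_chain [m..<n] = simplex_bd {m..<n}"
proof
  fix \<tau>
  have osimplex: "osimplex (delete_nth i [m..<n]) \<tau> = (if \<tau> = {m..<n} - {m + i} then 1 else 0)"
    if "i < n - m" for i
  proof -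
    have del: "delete_nth i [m..<n] = [m..<m + i] @ [Suc (m + i)..<n]"
      unfolding delete_nth_def using that by (simp add: take_upt drop_upt add.commute)
    then have "inversions (delete_nth i [m..<n]) = 0"
      by (intro inversions_sorted) (simp add: sorted_append)
    moreover have "set (delete_nth i [m..<n]) = {m..<n} - {m + i}" using del that by auto
    ultimately show ?thesis unfolding osimplex_def by simp
  qed
  have face_sign: "face_sign {m..<n} (m + i) = (-1) ^ i" if "i < n - m" for i
  proof -
    have "{w\<in>{m..<n}. w < m + i} = {m..<m + i}" using that by auto
    then show ?thesis unfolding face_sign_def by simp
  qed
  have "alt_bd_chain [m..<n] \<tau>
      = (\<Sum>i<n - m. if \<tau> = {m..<n} - {m + i} then face_sign {m..<n} (m + i) else 0)"
    unfolding alt_bd_chain_def using osimplex face_sign by (intro sum.cong) auto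
  also have "\<dots> = (\<Sum>v\<in>(+) m ` {..<n - m}. if \<tau> = {m..<n} - {v} then face_sign {m..<n} v else 0)"
    by (simp add: sum.reindex)
  also have "(+) m ` {..<n - m} = {m..<n}"
  proof
    show "{m..<n} \<subseteq> (+) m ` {..<n - m}"
    proof
      fix x assume "x \<in> {m..<n}"
      then have "x = m + (x - m)" "x - m \<in> {..<n - m}" by auto
      then show "x \<in> (+) m ` {..<n - m}" by blast
    qed
  qed auto
  finally show "alt_bd_chain [m..<n] \<tau> = simplex_bd {m..<n} \<tau>" unfolding simplex_bd_def .
qed

lemma coherent_ordering_upt: "coherent_ordering K [m..<n]"
  unfolding coherent_ordering_def
  using sorted_wrt_filter[of "(\<le>)" "[m..<n]"] by (simp add: inversions_sorted)

lemma coherently_represented_upt: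
  assumes "induced_simplex_boundary K d {m..<n}" "n - m = Suc d"
    "is_cycle K (d - 1) (simplex_bd {m..<n})"
  shows "coherently_represented K d (simplex_bd {m..<n}) [m..<n]"
  unfolding coherently_represented_def
  using assms coherent_ordering_upt homologous_refl by (simp add: alt_bd_chain_upt)

section \<open>The complex P\<close>

definition gallery1 :: "nat \<Rightarrow> nat \<Rightarrow> nat" where
  "gallery1 d k = (if k \<le> d then k else Suc k)"

definition gallery2 :: "nat \<Rightarrow> nat \<Rightarrow> nat" where
  "gallery2 d k = (if k \<le> 1 then k else if k \<le> d then Suc k else k + 2)"

abbreviation "chamber1 d \<equiv> strip_simplex (gallery1 d) d"
abbreviation "wall1 d \<equiv> strip_facet (gallery1 d) d"
abbreviation "chamber2 d \<equiv> strip_simplex (gallery2 d) d"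
abbreviation "wall2 d \<equiv> strip_facet (gallery2 d) d"

definition junction :: "nat \<Rightarrow> nat set" where "junction d = {1..Suc d}"
definition simplex_a :: "nat \<Rightarrow> nat set" where "simplex_a d = {0..d}"
definition simplex_b :: "nat \<Rightarrow> nat set" where "simplex_b d = {Suc d..Suc (2 * d)}"

definition base_facets :: "nat \<Rightarrow> nat set set" where
  "base_facets d = chamber1 d ` {1..d} \<union> chamber2 d ` {1..<d} \<union> {junction d}
    \<union> (\<lambda>v. simplex_b d - {v}) ` simplex_b d"

definition base_complex :: "nat \<Rightarrow> nat set set" where
  "base_complex d = {\<tau>. \<tau> \<noteq> {} \<and> (\<exists>\<sigma>\<in>base_facets d. \<tau> \<subseteq> \<sigma>)}"

definition is_wall :: "nat \<Rightarrow> nat set \<Rightarrow> bool" where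
  "is_wall d H \<longleftrightarrow> (\<exists>i\<in>{1..Suc d}. H = wall1 d i) \<or> (\<exists>i\<in>{1..d}. H = wall2 d i)"

definition complex_P :: "nat \<Rightarrow> nat set set" where
  "complex_P d = base_complex d \<union> {{0}}
    \<union> {insert 0 F | F. F \<in> base_complex d \<and> (\<forall>H. is_wall d H \<longrightarrow> \<not> H \<subseteq> F)}"

lemma strict_mono_gallery1: "strict_mono (gallery1 d)"
  unfolding strict_mono_def gallery1_def by auto

lemma strict_mono_gallery2: "strict_mono (gallery2 d)"
  unfolding strict_mono_def gallery2_def by auto

locale dim_ge_2 =
  fixes d :: nat
  assumes two_le_d: "2 \<le> d"
begin

lemmas card_chamber1 = card_strip_simplex[OF strict_mono_gallery1]
lemmas card_chamber2 = card_strip_simplex[OF strict_mono_gallery2]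
lemmas card_wall1 = card_strip_facet[OF strict_mono_gallery1]
lemmas card_wall2 = card_strip_facet[OF strict_mono_gallery2]

lemma card_junction: "card (junction d) = Suc d"
  and card_simplex_a: "card (simplex_a d) = Suc d"
  and card_simplex_b: "card (simplex_b d) = Suc d"
  unfolding junction_def simplex_a_def simplex_b_def by simp_all

lemma finite_junction [simp]: "finite (junction d)"
  and finite_simplex_a [simp]: "finite (simplex_a d)"
  and finite_simplex_b [simp]: "finite (simplex_b d)"
  unfolding junction_def simplex_a_def simplex_b_def by simp_all

lemma wall1_1: "wall1 d 1 = {1..d}"
proof -
  have "wall1 d 1 = gallery1 d ` {1..d}"
    unfolding strip_facet_def by (simp add: atLeastLessThanSuc_atLeastAtMost)
  also have "\<dots> = {1..d}" unfolding gallery1_def by (auto simp: image_iff)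
  finally show ?thesis .
qed

lemma wall2_1: "wall2 d 1 = {1..Suc d} - {2}"
proof -
  have "wall2 d 1 = gallery2 d ` {1..d}"
    unfolding strip_facet_def by (simp add: atLeastLessThanSuc_atLeastAtMost)
  also have "\<dots> = {1..Suc d} - {2}"
  proof
    show "gallery2 d ` {1..d} \<subseteq> {1..Suc d} - {2}" unfolding gallery2_def by auto
    show "{1..Suc d} - {2} \<subseteq> gallery2 d ` {1..d}"
    proof
      fix x assume x: "x \<in> {1..Suc d} - {2}"
      show "x \<in> gallery2 d ` {1..d}"
      proof (cases "x = 1")
        case True
        then show ?thesis using two_le_d unfolding gallery2_def by (auto intro!: image_eqI[of _ _ 1])
      next
        case False
        then have "gallery2 d (x - 1) = x" "x - 1 \<in> {1..d}" using x unfolding gallery2_def by auto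
        then show ?thesis by force
      qed
    qed
  qed
  finally show ?thesis .
qed

lemma wall1_last: "wall1 d (Suc d) = simplex_b d - {Suc d}"
proof -
  have "gallery1 d ` {Suc d..<Suc d + d} = simplex_b d - {Suc d}"
  proof
    show "gallery1 d ` {Suc d..<Suc d + d} \<subseteq> simplex_b d - {Suc d}"
      unfolding gallery1_def simplex_b_def by auto
    show "simplex_b d - {Suc d} \<subseteq> gallery1 d ` {Suc d..<Suc d + d}"
    proof
      fix x assume "x \<in> simplex_b d - {Suc d}"
      then have "gallery1 d (x - 1) = x" "x - 1 \<in> {Suc d..<Suc d + d}"
        unfolding gallery1_def simplex_b_def by auto
      then show "x \<in> gallery1 d ` {Suc d..<Suc d + d}" by force
    qed
  qed
  then show ?thesis unfolding strip_facet_def by simp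
qed

lemma wall2_last: "wall2 d d = simplex_b d - {d + 2}"
proof -
  have "gallery2 d ` {d..<d + d} = simplex_b d - {d + 2}"
  proof
    show "gallery2 d ` {d..<d + d} \<subseteq> simplex_b d - {d + 2}"
      unfolding gallery2_def simplex_b_def using two_le_d by auto
    show "simplex_b d - {d + 2} \<subseteq> gallery2 d ` {d..<d + d}"
    proof
      fix x assume x: "x \<in> simplex_b d - {d + 2}"
      show "x \<in> gallery2 d ` {d..<d + d}"
      proof (cases "x = Suc d")
        case True
        then have "gallery2 d d = x" "d \<in> {d..<d + d}" using two_le_d unfolding gallery2_def by auto
        then show ?thesis by (metis image_eqI)
      next
        case False
        then have "gallery2 d (x - 2) = x" "x - 2 \<in> {d..<d + d}"
          using x two_le_d unfolding gallery2_def simplex_b_def by auto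
        then show ?thesis by force
      qed
    qed
  qed
  then show ?thesis unfolding strip_facet_def by simp
qed

lemma zero_notin_wall1: "1 \<le> j \<Longrightarrow> 0 \<notin> wall1 d j"
  and zero_notin_wall2: "1 \<le> j \<Longrightarrow> 0 \<notin> wall2 d j"
  unfolding strip_facet_def gallery1_def gallery2_def by auto

lemma zero_notin_wall: "is_wall d H \<Longrightarrow> 0 \<notin> H"
  unfolding is_wall_def using zero_notin_wall1 zero_notin_wall2 by auto

lemma card_wall: "is_wall d H \<Longrightarrow> card H = d"
  unfolding is_wall_def using card_wall1 card_wall2 by auto

lemma Suc_d_in_wall2: "1 \<le> j \<Longrightarrow> j \<le> d \<Longrightarrow> Suc d \<in> wall2 d j"
proof -
  assume "1 \<le> j" "j \<le> d"
  then have "d \<in> {j..<j+d}" by auto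
  moreover have "gallery2 d d = Suc d" using two_le_d unfolding gallery2_def by simp
  ultimately show ?thesis unfolding strip_facet_def by force
qed

lemma wall1_contains_2_or_d_plus_2:
  assumes "1 \<le> j" "j \<le> Suc d"
  shows "2 \<in> wall1 d j \<or> d + 2 \<in> wall1 d j"
proof (cases "j = 1")
  case True
  then show ?thesis using wall1_1 two_le_d by auto
next
  case False
  then have "Suc d \<in> {j..<j+d}" "gallery1 d (Suc d) = d + 2"
    using assms two_le_d unfolding gallery1_def by auto
  then show ?thesis unfolding strip_facet_def by force
qed

lemma Suc_d_notin_chamber1: "Suc d \<notin> chamber1 d i"
  unfolding strip_simplex_def gallery1_def by auto

lemma notin_chamber2: "2 \<notin> chamber2 d i" "d + 2 \<notin> chamber2 d i"
  unfolding strip_simplex_def gallery2_def using two_le_d by auto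

lemma wall_in_chamber1_iff:
  assumes "is_wall d H"
  shows "H \<subseteq> chamber1 d i \<longleftrightarrow> H = wall1 d i \<or> H = wall1 d (Suc i)"
proof -
  have wall1: "wall1 d j \<subseteq> chamber1 d i \<longleftrightarrow> j = i \<or> j = Suc i" for j
    using two_le_d by (intro strip_facet_subset_strip_simplex_iff strict_mono_gallery1) simp
  have "\<not> wall2 d j \<subseteq> chamber1 d i" if "j \<in> {1..d}" for j
    using that Suc_d_in_wall2 Suc_d_notin_chamber1 by auto
  note not_wall2 = this
  show ?thesis
  proof
    assume sub: "H \<subseteq> chamber1 d i"
    with assms not_wall2 obtain j where "H = wall1 d j" unfolding is_wall_def by blast
    then show "H = wall1 d i \<or> H = wall1 d (Suc i)" using sub wall1 by auto
  qed (use wall1[of i] wall1[of "Suc i"] in auto)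
qed

lemma wall_in_chamber2_iff:
  assumes "is_wall d H"
  shows "H \<subseteq> chamber2 d i \<longleftrightarrow> H = wall2 d i \<or> H = wall2 d (Suc i)"
proof -
  have wall2: "wall2 d j \<subseteq> chamber2 d i \<longleftrightarrow> j = i \<or> j = Suc i" for j
    using two_le_d by (intro strip_facet_subset_strip_simplex_iff strict_mono_gallery2) simp
  have "\<not> wall1 d j \<subseteq> chamber2 d i" if "j \<in> {1..Suc d}" for j
    using that wall1_contains_2_or_d_plus_2 notin_chamber2 by force
  note not_wall1 = this
  show ?thesis
  proof
    assume sub: "H \<subseteq> chamber2 d i"
    with assms not_wall1 obtain j where "H = wall2 d j" unfolding is_wall_def by blast
    then show "H = wall2 d i \<or> H = wall2 d (Suc i)" using sub wall2 by auto
  qed (use wall2[of i] wall2[of "Suc i"] in auto)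
qed

lemma base_facets_subset: "\<sigma> \<in> base_facets d \<Longrightarrow> \<sigma> \<subseteq> {1..Suc (2 * d)}"
  unfolding base_facets_def strip_simplex_def junction_def simplex_b_def gallery1_def gallery2_def
  by (auto split: if_splits)

lemma base_complex_subset: "\<tau> \<in> base_complex d \<Longrightarrow> \<tau> \<subseteq> {1..Suc (2 * d)}"
  unfolding base_complex_def using base_facets_subset by blast

lemma finite_base_complex_simplex: "\<tau> \<in> base_complex d \<Longrightarrow> finite \<tau>"
  using base_complex_subset finite_subset by blast

lemma facet_in_base_complex: "\<sigma> \<in> base_facets d \<Longrightarrow> \<tau> \<subseteq> \<sigma> \<Longrightarrow> \<tau> \<noteq> {} \<Longrightarrow> \<tau> \<in> base_complex d"
  unfolding base_complex_def by blast

lemma chamber1_in_base_complex: "i \<in> {1..d} \<Longrightarrow> chamber1 d i \<in> base_complex d"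
  and chamber2_in_base_complex: "i \<in> {1..<d} \<Longrightarrow> chamber2 d i \<in> base_complex d"
  and junction_in_base_complex: "junction d \<in> base_complex d"
  by (rule facet_in_base_complex[OF _ subset_refl];
      force simp: base_facets_def strip_simplex_def junction_def)+

lemma base_complex_subset_complex_P: "base_complex d \<subseteq> complex_P d"
  unfolding complex_P_def by blast

lemma complex_P_cases:
  assumes "\<sigma> \<in> complex_P d"
  obtains "\<sigma> \<in> base_complex d" "0 \<notin> \<sigma>" | "\<sigma> = {0}"
  | F where "\<sigma> = insert 0 F" "0 \<notin> F" "F \<in> base_complex d" "\<forall>H. is_wall d H \<longrightarrow> \<not> H \<subseteq> F"
proof -
  have "\<sigma> \<in> base_complex d \<or> \<sigma> = {0} \<or> (\<exists>F. \<sigma> = insert 0 F \<and> F \<in> base_complex d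
      \<and> (\<forall>H. is_wall d H \<longrightarrow> \<not> H \<subseteq> F))"
    using assms unfolding complex_P_def by blast
  moreover have "0 \<notin> \<tau>" if "\<tau> \<in> base_complex d" for \<tau>
    using base_complex_subset[OF that] by auto
  ultimately show thesis using that by blast
qed

lemma complex_P_subset: "\<sigma> \<in> complex_P d \<Longrightarrow> \<sigma> \<subseteq> {..<2 * d + 2}"
  by (erule complex_P_cases) (use base_complex_subset in fastforce)+

lemma complex_P_nonempty: "\<sigma> \<in> complex_P d \<Longrightarrow> \<sigma> \<noteq> {}"
  by (erule complex_P_cases) (auto simp: base_complex_def)

lemma complex_P_face:
  assumes \<sigma>: "\<sigma> \<in> complex_P d" and \<tau>: "\<tau> \<subseteq> \<sigma>" "\<tau> \<noteq> {}"
  shows "\<tau> \<in> complex_P d"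
  using \<sigma>
proof (cases rule: complex_P_cases)
  case 1
  then have "\<tau> \<in> base_complex d" using \<tau> unfolding base_complex_def by blast
  then show ?thesis unfolding complex_P_def by blast
next
  case 2
  then have "\<tau> = {0}" using \<tau> by blast
  then show ?thesis unfolding complex_P_def by blast
next
  case (3 F)
  show ?thesis
  proof (cases "0 \<in> \<tau>")
    case False
    then have "\<tau> \<subseteq> F" using \<tau>(1) 3(1) by blast
    then have "\<tau> \<in> base_complex d" using \<tau>(2) 3(3) unfolding base_complex_def by blast
    then show ?thesis unfolding complex_P_def by blast
  next
    case True
    show ?thesis
    proof (cases "\<tau> = {0}")
      case True
      then show ?thesis unfolding complex_P_def by blast
    next
      case False
      define G where "G = \<tau> - {0}"
      have G: "G \<subseteq> F" "G \<noteq> {}" "\<tau> = insert 0 G"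
        using \<tau> 3(1) False True unfolding G_def by auto
      then have "G \<in> base_complex d" "\<forall>H. is_wall d H \<longrightarrow> \<not> H \<subseteq> G"
        using 3(3,4) unfolding base_complex_def by blast+
      then show ?thesis using G(3) unfolding complex_P_def by blast
    qed
  qed
qed

lemma simplicial_complex_complex_P: "simplicial_complex (complex_P d)"
proof -
  have "complex_P d \<subseteq> Pow {..<2 * d + 2}" using complex_P_subset by blast
  then have "finite (complex_P d)" by (rule finite_subset) simp
  moreover have "finite \<sigma>" if "\<sigma> \<in> complex_P d" for \<sigma>
    using complex_P_subset[OF that] finite_subset by blast
  ultimately show ?thesis
    unfolding simplicial_complex_def using complex_P_nonempty complex_P_face by blast
qed

lemma cone_in_complex_P:
  assumes "F \<in> base_complex d" "card F = d" "\<not> is_wall d F"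
  shows "insert 0 F \<in> complex_P d"
proof -
  have "\<not> H \<subseteq> F" if H: "is_wall d H" for H
  proof
    assume "H \<subseteq> F"
    then have "H = F"
      using card_subset_eq[OF finite_base_complex_simplex[OF assms(1)]] card_wall[OF H] assms(2)
      by simp
    then show False using H assms(3) by simp
  qed
  then show ?thesis using assms(1) unfolding complex_P_def by blast
qed

lemma complex_P_top_simplex_cases:
  assumes "\<sigma> \<in> complex_P d" "card \<sigma> = Suc d"
  obtains i where "i \<in> {1..d}" "\<sigma> = chamber1 d i"
  | i where "i \<in> {1..<d}" "\<sigma> = chamber2 d i"
  | "\<sigma> = junction d"
  | F where "\<sigma> = insert 0 F" "0 \<notin> F" "F \<in> base_complex d" "\<forall>H. is_wall d H \<longrightarrow> \<not> H \<subseteq> F"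
proof -
  have base: "(\<exists>i\<in>{1..d}. \<tau> = chamber1 d i) \<or> (\<exists>i\<in>{1..<d}. \<tau> = chamber2 d i) \<or> \<tau> = junction d"
    if \<tau>: "\<tau> \<in> base_complex d" "card \<tau> = Suc d" for \<tau>
  proof -
    obtain g where g: "g \<in> base_facets d" "\<tau> \<subseteq> g" using \<tau> unfolding base_complex_def by blast
    have "finite g" using base_facets_subset[OF g(1)] finite_subset by blast
    have "g \<notin> (\<lambda>v. simplex_b d - {v}) ` simplex_b d"
      using card_mono[OF \<open>finite g\<close> g(2)] \<tau>(2) card_simplex_b by auto
    then have g': "g \<in> chamber1 d ` {1..d} \<union> chamber2 d ` {1..<d} \<union> {junction d}"
      using g(1) unfolding base_facets_def by blast
    then have "card g = Suc d" using card_chamber1 card_chamber2 card_junction by auto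
    then have "\<tau> = g" using card_subset_eq[OF \<open>finite g\<close> g(2)] \<tau>(2) by simp
    with g' show ?thesis by auto
  qed
  from assms(1) show thesis
  proof (cases rule: complex_P_cases)
    case 1
    then show ?thesis using base assms(2) that(1-3) by blast
  next
    case 2
    then show ?thesis using assms(2) two_le_d by simp
  qed (use that(4) in blast)
qed

lemma wall1_in_junction_iff: "j \<in> {1..Suc d} \<Longrightarrow> wall1 d j \<subseteq> junction d \<longleftrightarrow> j = 1"
proof
  assume j: "j \<in> {1..Suc d}" and sub: "wall1 d j \<subseteq> junction d"
  show "j = 1"
  proof (rule ccontr)
    assume "j \<noteq> 1"
    then have "Suc d \<in> {j..<j+d}" "gallery1 d (Suc d) = d + 2"
      using j two_le_d unfolding gallery1_def by auto
    then have "d + 2 \<in> wall1 d j" unfolding strip_facet_def by force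
    then show False using sub unfolding junction_def by auto
  qed
qed (use wall1_1 in \<open>auto simp: junction_def\<close>)

lemma wall2_in_junction_iff: "j \<in> {1..d} \<Longrightarrow> wall2 d j \<subseteq> junction d \<longleftrightarrow> j = 1"
proof
  assume j: "j \<in> {1..d}" and sub: "wall2 d j \<subseteq> junction d"
  show "j = 1"
  proof (rule ccontr)
    assume "j \<noteq> 1"
    then have "j + d - 1 \<in> {j..<j+d}" "gallery2 d (j + d - 1) = j + d + 1"
      using j two_le_d unfolding gallery2_def by auto
    then have "j + d + 1 \<in> wall2 d j" unfolding strip_facet_def by force
    then show False using sub \<open>j \<noteq> 1\<close> j unfolding junction_def by auto
  qed
qed (use wall2_1 in \<open>auto simp: junction_def\<close>)

lemma wall1_in_simplex_a_iff: "j \<in> {1..Suc d} \<Longrightarrow> wall1 d j \<subseteq> simplex_a d \<longleftrightarrow> j = 1"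
proof
  assume j: "j \<in> {1..Suc d}" and sub: "wall1 d j \<subseteq> simplex_a d"
  show "j = 1"
  proof (rule ccontr)
    assume "j \<noteq> 1"
    then have "Suc d \<in> {j..<j+d}" "gallery1 d (Suc d) = d + 2"
      using j two_le_d unfolding gallery1_def by auto
    then have "d + 2 \<in> wall1 d j" unfolding strip_facet_def by force
    then show False using sub unfolding simplex_a_def by auto
  qed
qed (use wall1_1 in \<open>auto simp: simplex_a_def\<close>)

lemma wall2_not_in_simplex_a: "j \<in> {1..d} \<Longrightarrow> \<not> wall2 d j \<subseteq> simplex_a d"
  using Suc_d_in_wall2 unfolding simplex_a_def by fastforce

lemma wall1_in_simplex_b_iff: "j \<in> {1..Suc d} \<Longrightarrow> wall1 d j \<subseteq> simplex_b d \<longleftrightarrow> j = Suc d"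
proof
  assume j: "j \<in> {1..Suc d}" and sub: "wall1 d j \<subseteq> simplex_b d"
  show "j = Suc d"
  proof (rule ccontr)
    assume "j \<noteq> Suc d"
    then have "j \<in> {j..<j+d}" "gallery1 d j = j" using j two_le_d unfolding gallery1_def by auto
    then have "j \<in> wall1 d j" unfolding strip_facet_def by force
    then show False using sub j \<open>j \<noteq> Suc d\<close> unfolding simplex_b_def by auto
  qed
qed (auto simp: wall1_last)

lemma wall2_in_simplex_b_iff: "j \<in> {1..d} \<Longrightarrow> wall2 d j \<subseteq> simplex_b d \<longleftrightarrow> j = d"
proof
  assume j: "j \<in> {1..d}" and sub: "wall2 d j \<subseteq> simplex_b d"
  show "j = d"
  proof (rule ccontr)
    assume "j \<noteq> d"
    then have "j \<in> {j..<j+d}" "gallery2 d j \<le> d" using j two_le_d unfolding gallery2_def by auto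
    then have "gallery2 d j \<in> wall2 d j" unfolding strip_facet_def by force
    then show False using sub \<open>gallery2 d j \<le> d\<close> unfolding simplex_b_def by auto
  qed
qed (auto simp: wall2_last)

lemma face_sign_junction: "face_sign (junction d) (Suc d) = (-1) ^ d" "face_sign (junction d) 2 = -1"
proof -
  have "{w\<in>junction d. w < Suc d} = {1..d}" unfolding junction_def by auto
  then show "face_sign (junction d) (Suc d) = (-1) ^ d" unfolding face_sign_def by simp
  have "{w\<in>junction d. w < 2} = {1}" unfolding junction_def using two_le_d by auto
  then show "face_sign (junction d) 2 = -1" unfolding face_sign_def by simp
qed

lemma face_sign_simplex_b: "face_sign (simplex_b d) (Suc d) = 1" "face_sign (simplex_b d) (d + 2) = -1"
proof -
  have "{w\<in>simplex_b d. w < Suc d} = {}" unfolding simplex_b_def by auto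
  then show "face_sign (simplex_b d) (Suc d) = 1" unfolding face_sign_def by (simp only: card.empty power_0)
  have "{w\<in>simplex_b d. w < d + 2} = {Suc d}" unfolding simplex_b_def by auto
  then show "face_sign (simplex_b d) (d + 2) = -1" unfolding face_sign_def by simp
qed

lemma simplex_bd_junction_wall1: "j \<in> {1..Suc d} \<Longrightarrow>
    simplex_bd (junction d) (wall1 d j) = (if j = 1 then (-1) ^ d else 0)"
  and simplex_bd_junction_wall2: "j' \<in> {1..d} \<Longrightarrow>
    simplex_bd (junction d) (wall2 d j') = (if j' = 1 then -1 else 0)"
  and simplex_bd_simplex_a_wall1: "j \<in> {1..Suc d} \<Longrightarrow>
    simplex_bd (simplex_a d) (wall1 d j) = (if j = 1 then 1 else 0)"
  and simplex_bd_simplex_a_wall2: "j' \<in> {1..d} \<Longrightarrow> simplex_bd (simplex_a d) (wall2 d j') = 0"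
  and simplex_bd_simplex_b_wall1: "j \<in> {1..Suc d} \<Longrightarrow>
    simplex_bd (simplex_b d) (wall1 d j) = (if j = Suc d then 1 else 0)"
  and simplex_bd_simplex_b_wall2: "j' \<in> {1..d} \<Longrightarrow>
    simplex_bd (simplex_b d) (wall2 d j') = (if j' = d then -1 else 0)"
proof -
  have facets: "wall1 d 1 = junction d - {Suc d}" "wall2 d 1 = junction d - {2}"
    "wall1 d 1 = simplex_a d - {0}"
    unfolding wall1_1 wall2_1 junction_def simplex_a_def by auto
  have verts: "Suc d \<in> junction d" "2 \<in> junction d" "0 \<in> simplex_a d"
    "Suc d \<in> simplex_b d" "d + 2 \<in> simplex_b d"
    unfolding junction_def simplex_a_def simplex_b_def using two_le_d by auto
  note zero = simplex_bd_eq_0[OF finite_junction] simplex_bd_eq_0[OF finite_simplex_a]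
    simplex_bd_eq_0[OF finite_simplex_b]
  show "j \<in> {1..Suc d} \<Longrightarrow> simplex_bd (junction d) (wall1 d j) = (if j = 1 then (-1) ^ d else 0)"
    using wall1_in_junction_iff zero simplex_bd_facet[OF _ verts(1)] facets face_sign_junction by auto
  show "j' \<in> {1..d} \<Longrightarrow> simplex_bd (junction d) (wall2 d j') = (if j' = 1 then -1 else 0)"
    using wall2_in_junction_iff zero simplex_bd_facet[OF _ verts(2)] facets face_sign_junction by auto
  show "j \<in> {1..Suc d} \<Longrightarrow> simplex_bd (simplex_a d) (wall1 d j) = (if j = 1 then 1 else 0)"
    using wall1_in_simplex_a_iff zero simplex_bd_facet[OF _ verts(3)] facets by auto
  show "j' \<in> {1..d} \<Longrightarrow> simplex_bd (simplex_a d) (wall2 d j') = 0"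
    using wall2_not_in_simplex_a zero by auto
  show "j \<in> {1..Suc d} \<Longrightarrow> simplex_bd (simplex_b d) (wall1 d j) = (if j = Suc d then 1 else 0)"
    using wall1_in_simplex_b_iff zero simplex_bd_facet[OF _ verts(4)] wall1_last face_sign_simplex_b
    by auto
  show "j' \<in> {1..d} \<Longrightarrow> simplex_bd (simplex_b d) (wall2 d j') = (if j' = d then -1 else 0)"
    using wall2_in_simplex_b_iff zero simplex_bd_facet[OF _ verts(5)] wall2_last face_sign_simplex_b
    by auto
qed

section \<open>Homology of P\<close>

definition wall_sign :: int where "wall_sign = (-1) ^ Suc d"

lemma wall_sign_eq: "wall_sign = - ((-1) ^ d)"
  unfolding wall_sign_def by simp

lemma wall_sign_pow_d: "wall_sign ^ d = 1"
proof -
  have "wall_sign ^ d = (-1) ^ (Suc d * d)" unfolding wall_sign_def by (simp only: power_mult)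
  then show ?thesis by simp
qed

text \<open>Vanishes on all boundaries of P, but not on the boundaries of A and B.\<close>

definition wall_functional :: "(nat set \<Rightarrow> int) \<Rightarrow> int" where
  "wall_functional z = (\<Sum>i=1..Suc d. wall_sign ^ (i - 1) * z (wall1 d i))
    - (\<Sum>i=1..d. wall_sign ^ i * z (wall2 d i))"

lemma wall_functional_sum:
  "wall_functional (\<lambda>\<tau>. \<Sum>\<sigma>\<in>I. k \<sigma> * g \<sigma> \<tau>) = (\<Sum>\<sigma>\<in>I. k \<sigma> * wall_functional (g \<sigma>))"
proof -
  have "wall_functional (\<lambda>\<tau>. \<Sum>\<sigma>\<in>I. k \<sigma> * g \<sigma> \<tau>)
      = (\<Sum>\<sigma>\<in>I. k \<sigma> * (\<Sum>i=1..Suc d. wall_sign ^ (i - 1) * g \<sigma> (wall1 d i)))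
      - (\<Sum>\<sigma>\<in>I. k \<sigma> * (\<Sum>i=1..d. wall_sign ^ i * g \<sigma> (wall2 d i)))"
    unfolding wall_functional_def by (rule arg_cong2[where f = "(-)"]; rule sum_mult_sum_swap)
  then show ?thesis
    unfolding wall_functional_def by (simp add: sum_subtractf right_diff_distrib)
qed

lemma wall_functional_lincomb:
  "wall_functional (\<lambda>\<tau>. a * x \<tau> + b * y \<tau>) = a * wall_functional x + b * wall_functional y"
proof -
  have lin: "(\<Sum>i\<in>J. (c i :: int) * (a * z i + b * z' i))
      = a * (\<Sum>i\<in>J. c i * z i) + b * (\<Sum>i\<in>J. c i * z' i)" for J c z z'
    by (simp add: sum.distrib sum_distrib_left distrib_left mult.left_commute)
  show ?thesis unfolding wall_functional_def lin by (simp add: algebra_simps)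
qed

lemma wall_functional_chamber1:
  assumes i: "i \<in> {1..d}"
  shows "wall_functional (simplex_bd (chamber1 d i)) = 0"
proof -
  have "(\<Sum>j=1..Suc d. wall_sign ^ (j - 1) * simplex_bd (chamber1 d i) (wall1 d j))
      = wall_sign ^ (i - 1) * (-1) ^ d + wall_sign ^ (Suc i - 1) * 1"
    using i simplex_bd_strip_simplex[OF strict_mono_gallery1, of d] two_le_d
    by (subst sum_mult_two_deltas[where a = i and b = "Suc i"]) auto
  also have "\<dots> = 0"
  proof -
    have "wall_sign ^ (Suc i - 1) = wall_sign * wall_sign ^ (i - 1)"
      using i by (simp add: power_Suc[symmetric] del: power_Suc)
    then show ?thesis by (simp add: wall_sign_eq)
  qed
  finally have wall1_part: "(\<Sum>j=1..Suc d. wall_sign ^ (j - 1) * simplex_bd (chamber1 d i) (wall1 d j)) = 0" .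
  have "simplex_bd (chamber1 d i) (wall2 d j) = 0" if "j \<in> {1..d}" for j
    using that Suc_d_in_wall2 Suc_d_notin_chamber1 by (intro simplex_bd_eq_0) auto
  then show ?thesis unfolding wall_functional_def wall1_part by simp
qed

lemma wall_functional_chamber2:
  assumes i: "i \<in> {1..<d}"
  shows "wall_functional (simplex_bd (chamber2 d i)) = 0"
proof -
  have "(\<Sum>j=1..d. wall_sign ^ j * simplex_bd (chamber2 d i) (wall2 d j))
      = wall_sign ^ i * (-1) ^ d + wall_sign ^ Suc i * 1"
    using i simplex_bd_strip_simplex[OF strict_mono_gallery2, of d] two_le_d
    by (subst sum_mult_two_deltas[where a = i and b = "Suc i"]) auto
  also have "\<dots> = 0" by (simp add: wall_sign_eq)
  finally have wall2_part: "(\<Sum>j=1..d. wall_sign ^ j * simplex_bd (chamber2 d i) (wall2 d j)) = 0" .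
  have "simplex_bd (chamber2 d i) (wall1 d j) = 0" if "j \<in> {1..Suc d}" for j
    using that wall1_contains_2_or_d_plus_2 notin_chamber2 by (intro simplex_bd_eq_0) auto
  then show ?thesis unfolding wall_functional_def wall2_part by simp
qed

lemma wall_functional_junction: "wall_functional (simplex_bd (junction d)) = 0"
proof -
  have "(\<Sum>j=1..Suc d. wall_sign ^ (j - 1) * simplex_bd (junction d) (wall1 d j)) = (-1) ^ d"
    by (subst sum_mult_delta[where a = 1]) (auto simp: simplex_bd_junction_wall1)
  moreover have "(\<Sum>j=1..d. wall_sign ^ j * simplex_bd (junction d) (wall2 d j)) = - wall_sign"
    using two_le_d by (subst sum_mult_delta[where a = 1]) (auto simp: simplex_bd_junction_wall2)
  ultimately show ?thesis unfolding wall_functional_def wall_sign_eq by simp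
qed

lemma wall_functional_cone:
  assumes "0 \<notin> F" "finite F" "\<forall>H. is_wall d H \<longrightarrow> \<not> H \<subseteq> F"
  shows "wall_functional (simplex_bd (insert 0 F)) = 0"
proof -
  have "simplex_bd (insert 0 F) H = 0" if "is_wall d H" for H
    using zero_notin_wall[OF that] assms that by (intro simplex_bd_eq_0) auto
  moreover have "is_wall d (wall1 d j)" if "j \<in> {1..Suc d}" for j
    using that unfolding is_wall_def by blast
  moreover have "is_wall d (wall2 d j)" if "j \<in> {1..d}" for j
    using that unfolding is_wall_def by blast
  ultimately show ?thesis unfolding wall_functional_def by simp
qed

lemma wall_functional_simplex_a: "wall_functional (simplex_bd (simplex_a d)) = 1"
proof -
  have "(\<Sum>j=1..Suc d. wall_sign ^ (j - 1) * simplex_bd (simplex_a d) (wall1 d j)) = 1"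
    by (subst sum_mult_delta[where a = 1]) (auto simp: simplex_bd_simplex_a_wall1)
  then show ?thesis unfolding wall_functional_def by (simp add: simplex_bd_simplex_a_wall2)
qed

lemma wall_functional_simplex_b: "wall_functional (simplex_bd (simplex_b d)) = 2"
proof -
  have "(\<Sum>j=1..Suc d. wall_sign ^ (j - 1) * simplex_bd (simplex_b d) (wall1 d j)) = 1"
    by (subst sum_mult_delta[where a = "Suc d"]) (auto simp: simplex_bd_simplex_b_wall1 wall_sign_pow_d)
  moreover have "(\<Sum>j=1..d. wall_sign ^ j * simplex_bd (simplex_b d) (wall2 d j)) = -1"
    using two_le_d
    by (subst sum_mult_delta[where a = d]) (auto simp: simplex_bd_simplex_b_wall2 wall_sign_pow_d)
  ultimately show ?thesis unfolding wall_functional_def by simp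
qed

lemma wall_functional_top_simplex:
  assumes "\<sigma> \<in> complex_P d" "card \<sigma> = Suc d"
  shows "wall_functional (simplex_bd \<sigma>) = 0"
  using assms
  by (cases rule: complex_P_top_simplex_cases)
    (auto simp: wall_functional_chamber1 wall_functional_chamber2 wall_functional_junction
      intro!: wall_functional_cone finite_base_complex_simplex)

lemma wall_functional_boundary:
  assumes "is_boundary (complex_P d) (d - 1) x"
  shows "wall_functional x = 0"
proof -
  obtain c where c: "chain (complex_P d) (Suc (d - 1)) c" "x = bd (complex_P d) c"
    using assms unfolding is_boundary_def by blast
  have "Suc (Suc (d - 1)) = Suc d" using two_le_d by simp
  then have "x = (\<lambda>\<tau>. \<Sum>\<sigma>\<in>{\<sigma>\<in>complex_P d. card \<sigma> = Suc d}. c \<sigma> * simplex_bd \<sigma> \<tau>)"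
    using bd_chain_expansion[OF simplicial_complex_complex_P c(1)] c(2) by simp
  then show ?thesis by (simp add: wall_functional_sum wall_functional_top_simplex)
qed

lemma cone_facet_in_complex_P:
  assumes "\<sigma> \<in> base_complex d" "card \<sigma> = Suc d" "v \<in> \<sigma>" "\<not> is_wall d (\<sigma> - {v})"
  shows "insert 0 (\<sigma> - {v}) \<in> complex_P d"
proof (rule cone_in_complex_P)
  show card: "card (\<sigma> - {v}) = d" using assms(2,3) finite_base_complex_simplex[OF assms(1)] by simp
  then have "\<sigma> - {v} \<noteq> {}" using two_le_d by (metis card.empty not_numeral_le_zero)
  then show "\<sigma> - {v} \<in> base_complex d" using assms(1) unfolding base_complex_def by blast
qed (use assms(4) in simp)

lemma is_boundary_gallery_step:
  assumes f: "strict_mono f" and \<sigma>: "strip_simplex f d i \<in> base_complex d"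
    and walls: "\<And>H. is_wall d H \<Longrightarrow> H \<subseteq> strip_simplex f d i \<Longrightarrow>
      H = strip_facet f d i \<or> H = strip_facet f d (Suc i)"
  shows "is_boundary (complex_P d) (d - 1) (\<lambda>\<tau>. simplex_bd (insert 0 (strip_facet f d (Suc i))) \<tau>
    - wall_sign * simplex_bd (insert 0 (strip_facet f d i)) \<tau>)"
proof -
  let ?\<sigma> = "strip_simplex f d i"
  have card: "card ?\<sigma> = Suc (Suc (d - 1))" using card_strip_simplex[OF f] two_le_d by simp
  have "f i < f (i + d)" using f two_le_d by (simp add: strict_mono_less)
  then have xy: "f (i + d) \<noteq> f i" by simp
  have cones: "insert 0 (?\<sigma> - {v}) \<in> complex_P d"
    if v: "v \<in> ?\<sigma>" "v \<noteq> f (i + d)" "v \<noteq> f i" for v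
  proof (rule cone_facet_in_complex_P[OF \<sigma> card_strip_simplex[OF f] v(1)])
    show "\<not> is_wall d (?\<sigma> - {v})"
    proof
      assume "is_wall d (?\<sigma> - {v})"
      then have "?\<sigma> - {v} = ?\<sigma> - {f (i + d)} \<or> ?\<sigma> - {v} = ?\<sigma> - {f i}"
        using walls[of "?\<sigma> - {v}"] strip_facet_eq_Diff[OF f] by auto
      then show False using v strip_vertices_in_strip_simplex[OF f] by blast
    qed
  qed
  have "is_boundary (complex_P d) (d - 1)
      (\<lambda>\<tau>. face_sign ?\<sigma> (f (i + d)) * simplex_bd (insert 0 (?\<sigma> - {f (i + d)})) \<tau>
        + face_sign ?\<sigma> (f i) * simplex_bd (insert 0 (?\<sigma> - {f i})) \<tau>)"
    using \<sigma> base_complex_subset[OF \<sigma>] base_complex_subset_complex_P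
      strip_vertices_in_strip_simplex[OF f] xy cones
    by (intro is_boundary_two_cone_facets[OF simplicial_complex_complex_P _ _ card]) auto
  then show ?thesis
    unfolding face_sign_strip_simplex[OF f] strip_facet_eq_Diff[OF f, symmetric] wall_sign_eq
    by (simp add: algebra_simps)
qed

lemma insert_0_wall1_1: "insert 0 (wall1 d 1) = simplex_a d"
  unfolding wall1_1 simplex_a_def by auto

lemma is_boundary_cone_wall1:
  assumes "i \<in> {1..Suc d}"
  shows "is_boundary (complex_P d) (d - 1)
    (\<lambda>\<tau>. simplex_bd (insert 0 (wall1 d i)) \<tau> - wall_sign ^ (i - 1) * simplex_bd (simplex_a d) \<tau>)"
proof -
  have "is_boundary (complex_P d) (d - 1) (\<lambda>\<tau>. simplex_bd (insert 0 (wall1 d i)) \<tau>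
      - wall_sign ^ (i - 1) * simplex_bd (insert 0 (wall1 d 1)) \<tau>)"
  proof (rule is_boundary_telescope)
    fix j assume "1 \<le> j" "j < i"
    then have "j \<in> {1..d}" using assms by auto
    then show "is_boundary (complex_P d) (d - 1) (\<lambda>\<tau>. simplex_bd (insert 0 (wall1 d (Suc j))) \<tau>
        - wall_sign * simplex_bd (insert 0 (wall1 d j)) \<tau>)"
    proof (rule is_boundary_gallery_step[OF strict_mono_gallery1 chamber1_in_base_complex])
      fix H assume "is_wall d H" "H \<subseteq> chamber1 d j"
      then show "H = wall1 d j \<or> H = wall1 d (Suc j)" using wall_in_chamber1_iff by blast
    qed
  qed (use assms in simp)
  then show ?thesis unfolding insert_0_wall1_1 .
qed

lemma junction_facet_not_wall:
  assumes v: "v \<in> junction d" "v \<noteq> Suc d" "v \<noteq> 2"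
  shows "\<not> is_wall d (junction d - {v})"
proof
  let ?J = "junction d"
  have facets: "?J - {Suc d} = wall1 d 1" "?J - {2} = wall2 d 1"
    unfolding wall1_1 wall2_1 junction_def by auto
  assume "is_wall d (?J - {v})"
  then consider j where "j \<in> {1..Suc d}" "?J - {v} = wall1 d j"
    | j where "j \<in> {1..d}" "?J - {v} = wall2 d j"
    unfolding is_wall_def by blast
  then have "?J - {v} = ?J - {Suc d} \<or> ?J - {v} = ?J - {2}"
  proof cases
    case (1 j)
    then have "j = 1" using wall1_in_junction_iff by blast
    then show ?thesis using 1 facets by simp
  next
    case (2 j)
    then have "j = 1" using wall2_in_junction_iff by blast
    then show ?thesis using 2 facets by simp
  qed
  moreover have "Suc d \<in> ?J" "2 \<in> ?J" using two_le_d unfolding junction_def by auto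
  ultimately show False using v by blast
qed

lemma is_boundary_cone_wall2_1:
  "is_boundary (complex_P d) (d - 1)
    (\<lambda>\<tau>. simplex_bd (insert 0 (wall2 d 1)) \<tau> + wall_sign * simplex_bd (simplex_a d) \<tau>)"
proof -
  let ?J = "junction d"
  have verts: "Suc d \<in> ?J" "2 \<in> ?J" "Suc d \<noteq> 2" using two_le_d unfolding junction_def by auto
  have facets: "?J - {Suc d} = wall1 d 1" "?J - {2} = wall2 d 1"
    unfolding wall1_1 wall2_1 junction_def by auto
  have card: "card ?J = Suc (Suc (d - 1))" using card_junction two_le_d by simp
  have "is_boundary (complex_P d) (d - 1)
      (\<lambda>\<tau>. face_sign ?J (Suc d) * simplex_bd (insert 0 (?J - {Suc d})) \<tau>
        + face_sign ?J 2 * simplex_bd (insert 0 (?J - {2})) \<tau>)"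
  proof (rule is_boundary_two_cone_facets[OF simplicial_complex_complex_P _ _ card verts])
    show "?J \<in> complex_P d" using junction_in_base_complex base_complex_subset_complex_P by blast
    show "0 \<notin> ?J" unfolding junction_def by simp
    fix v assume "v \<in> ?J" "v \<noteq> Suc d" "v \<noteq> 2"
    then show "insert 0 (?J - {v}) \<in> complex_P d"
      by (intro cone_facet_in_complex_P junction_in_base_complex card_junction junction_facet_not_wall)
  qed
  from is_boundary_scale[OF this, of "-1"] show ?thesis
    unfolding facets face_sign_junction wall_sign_eq insert_0_wall1_1 by (simp add: algebra_simps)
qed

lemma is_boundary_cone_wall2:
  assumes "i \<in> {1..d}"
  shows "is_boundary (complex_P d) (d - 1)
    (\<lambda>\<tau>. simplex_bd (insert 0 (wall2 d i)) \<tau> + wall_sign ^ i * simplex_bd (simplex_a d) \<tau>)"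
proof -
  have "is_boundary (complex_P d) (d - 1) (\<lambda>\<tau>. simplex_bd (insert 0 (wall2 d i)) \<tau>
      - wall_sign ^ (i - 1) * simplex_bd (insert 0 (wall2 d 1)) \<tau>)"
  proof (rule is_boundary_telescope)
    fix j assume "1 \<le> j" "j < i"
    then have "j \<in> {1..<d}" using assms by auto
    then show "is_boundary (complex_P d) (d - 1) (\<lambda>\<tau>. simplex_bd (insert 0 (wall2 d (Suc j))) \<tau>
        - wall_sign * simplex_bd (insert 0 (wall2 d j)) \<tau>)"
    proof (rule is_boundary_gallery_step[OF strict_mono_gallery2 chamber2_in_base_complex])
      fix H assume "is_wall d H" "H \<subseteq> chamber2 d j"
      then show "H = wall2 d j \<or> H = wall2 d (Suc j)" using wall_in_chamber2_iff by blast
    qed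
  qed (use assms in simp)
  from is_boundary_lincomb[OF this is_boundary_cone_wall2_1, of 1 "wall_sign ^ (i - 1)"]
  have "is_boundary (complex_P d) (d - 1) (\<lambda>\<tau>. simplex_bd (insert 0 (wall2 d i)) \<tau>
      + wall_sign * wall_sign ^ (i - 1) * simplex_bd (simplex_a d) \<tau>)"
    by (simp add: algebra_simps)
  moreover have "wall_sign * wall_sign ^ (i - 1) = wall_sign ^ i"
    using assms by (simp add: power_Suc[symmetric] del: power_Suc)
  ultimately show ?thesis by simp
qed

lemma inj_on_wall1: "inj_on (wall1 d) I"
proof (rule inj_onI)
  fix i j assume "wall1 d i = wall1 d j"
  with two_le_d show "i = j" by (intro strip_facet_inj[OF strict_mono_gallery1]) simp_all
qed

lemma inj_on_wall2: "inj_on (wall2 d) I"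
proof (rule inj_onI)
  fix i j assume "wall2 d i = wall2 d j"
  with two_le_d show "i = j" by (intro strip_facet_inj[OF strict_mono_gallery2]) simp_all
qed

lemma wall1_neq_wall2: "j \<in> {1..d} \<Longrightarrow> wall1 d i \<noteq> wall2 d j"
proof -
  assume "j \<in> {1..d}"
  moreover have "Suc d \<notin> wall1 d i" unfolding strip_facet_def gallery1_def by auto
  ultimately show ?thesis using Suc_d_in_wall2 by auto
qed

definition cone_off_walls :: "(nat set \<Rightarrow> int) \<Rightarrow> nat set \<Rightarrow> int" where
  "cone_off_walls z X = (if 0 \<in> X \<and> \<not> is_wall d (X - {0}) then z (X - {0}) else 0)"

lemma cone0_split:
  "cone0 z = (\<lambda>X. cone_off_walls z X
    + ((\<Sum>i=1..Suc d. z (wall1 d i) * unit_chain (insert 0 (wall1 d i)) X)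
    + (\<Sum>i=1..d. z (wall2 d i) * unit_chain (insert 0 (wall2 d i)) X)))"
proof
  fix X
  show "cone0 z X = cone_off_walls z X
    + ((\<Sum>i=1..Suc d. z (wall1 d i) * unit_chain (insert 0 (wall1 d i)) X)
    + (\<Sum>i=1..d. z (wall2 d i) * unit_chain (insert 0 (wall2 d i)) X))"
  proof (cases "0 \<in> X")
    case False
    then have "unit_chain (insert 0 H) X = 0" for H unfolding unit_chain_def by auto
    then show ?thesis using False unfolding cone0_def cone_off_walls_def by simp
  next
    case True
    define G where "G = X - {0}"
    have X: "X = insert 0 G" "0 \<notin> G" using True unfolding G_def by auto
    have s1: "(\<Sum>i=1..Suc d. z (wall1 d i) * unit_chain (insert 0 (wall1 d i)) X)
        = (if G \<in> wall1 d ` {1..Suc d} then z G else 0)"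
      unfolding X(1) using X(2) zero_notin_wall1 by (intro sum_unit_chain_insert_0 inj_on_wall1) auto
    have s2: "(\<Sum>i=1..d. z (wall2 d i) * unit_chain (insert 0 (wall2 d i)) X)
        = (if G \<in> wall2 d ` {1..d} then z G else 0)"
      unfolding X(1) using X(2) zero_notin_wall2 by (intro sum_unit_chain_insert_0 inj_on_wall2) auto
    have "is_wall d G \<longleftrightarrow> G \<in> wall1 d ` {1..Suc d} \<or> G \<in> wall2 d ` {1..d}"
      unfolding is_wall_def by blast
    moreover have "\<not> (G \<in> wall1 d ` {1..Suc d} \<and> G \<in> wall2 d ` {1..d})"
      using wall1_neq_wall2 by blast
    ultimately show ?thesis
      unfolding s1 s2 using True unfolding cone0_def cone_off_walls_def G_def by auto
  qed
qed

lemma chain_cone_off_walls: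
  assumes z: "chain (complex_P d) (d - 1) z"
  shows "chain (complex_P d) d (cone_off_walls z)"
  unfolding chain_def
proof (intro allI impI)
  fix X assume "cone_off_walls z X \<noteq> 0"
  then have X: "0 \<in> X" "\<not> is_wall d (X - {0})" "z (X - {0}) \<noteq> 0"
    unfolding cone_off_walls_def by (auto split: if_splits)
  define G where "G = X - {0}"
  have G: "G \<in> complex_P d" "card G = d" "0 \<notin> G"
    using z X(3) two_le_d unfolding chain_def G_def by auto
  then have "G \<in> base_complex d" by (cases rule: complex_P_cases) (use two_le_d in auto)
  then have "insert 0 G \<in> complex_P d" using G X(2) cone_in_complex_P unfolding G_def by blast
  moreover have "X = insert 0 G" using X(1) unfolding G_def by auto
  moreover have "card (insert 0 G) = Suc d"
    using G finite_base_complex_simplex[OF \<open>G \<in> base_complex d\<close>] by simp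
  ultimately show "X \<in> complex_P d \<and> card X = Suc d" by simp
qed

lemma cycle_cone_decomposition:
  assumes z: "is_cycle (complex_P d) (d - 1) z"
  shows "z = (\<lambda>\<tau>. bd (complex_P d) (cone_off_walls z) \<tau>
    + ((\<Sum>i=1..Suc d. z (wall1 d i) * simplex_bd (insert 0 (wall1 d i)) \<tau>)
    + (\<Sum>i=1..d. z (wall2 d i) * simplex_bd (insert 0 (wall2 d i)) \<tau>)))"
proof -
  define U where "U = {..<2 * d + 2}"
  have U: "finite U" "0 \<in> U" "\<Union>(complex_P d) \<subseteq> U"
    using complex_P_subset unfolding U_def by auto
  have walls_U: "insert 0 (wall1 d i) \<subseteq> U" if "i \<in> {1..Suc d}" for i
    using that unfolding U_def strip_facet_def gallery1_def by auto
  have walls2_U: "insert 0 (wall2 d i) \<subseteq> U" if "i \<in> {1..d}" for i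
    using that unfolding U_def strip_facet_def gallery2_def by auto
  have chain: "chain (complex_P d) (d - 1) z" using z unfolding is_cycle_def by simp
  have "full_bd U z = (\<lambda>_. 0)"
    using z bd_eq_full_bd[OF simplicial_complex_complex_P U(1,3) chain] two_le_d
    unfolding is_cycle_def by simp
  then have "z = full_bd U (cone0 z)" using full_bd_cone0[OF U(1,2)] by simp
  also have "\<dots> = (\<lambda>\<tau>. full_bd U (cone_off_walls z) \<tau>
    + ((\<Sum>i=1..Suc d. z (wall1 d i) * simplex_bd (insert 0 (wall1 d i)) \<tau>)
    + (\<Sum>i=1..d. z (wall2 d i) * simplex_bd (insert 0 (wall2 d i)) \<tau>)))"
    unfolding cone0_split full_bd_add
    using walls_U walls2_U full_bd_sum_unit_chains[OF U(1), of "{1..Suc d}" "\<lambda>i. insert 0 (wall1 d i)"]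
      full_bd_sum_unit_chains[OF U(1), of "{1..d}" "\<lambda>i. insert 0 (wall2 d i)"]
    by (simp del: sum.cl_ivl_Suc)
  also have "full_bd U (cone_off_walls z) = bd (complex_P d) (cone_off_walls z)"
    using bd_eq_full_bd[OF simplicial_complex_complex_P U(1,3) chain_cone_off_walls[OF chain]]
      two_le_d by simp
  finally show ?thesis .
qed

lemma is_boundary_cycle_diff_simplex_a:
  assumes z: "is_cycle (complex_P d) (d - 1) z"
  shows "is_boundary (complex_P d) (d - 1) (\<lambda>\<tau>. z \<tau> - wall_functional z * simplex_bd (simplex_a d) \<tau>)"
proof -
  let ?A = "simplex_bd (simplex_a d)"
  define T1 where "T1 \<tau> = (\<Sum>i=1..Suc d. z (wall1 d i)
    * (simplex_bd (insert 0 (wall1 d i)) \<tau> - wall_sign ^ (i - 1) * ?A \<tau>))" for \<tau>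
  define T2 where "T2 \<tau> = (\<Sum>i=1..d. z (wall2 d i)
    * (simplex_bd (insert 0 (wall2 d i)) \<tau> + wall_sign ^ i * ?A \<tau>))" for \<tau>
  have "is_boundary (complex_P d) (d - 1) (\<lambda>\<tau>. bd (complex_P d) (cone_off_walls z) \<tau> + (T1 \<tau> + T2 \<tau>))"
  proof (intro is_boundary_add)
    have "chain (complex_P d) (Suc (d - 1)) (cone_off_walls z)"
      using chain_cone_off_walls z two_le_d unfolding is_cycle_def by simp
    then show "is_boundary (complex_P d) (d - 1) (bd (complex_P d) (cone_off_walls z))"
      unfolding is_boundary_def by blast
    show "is_boundary (complex_P d) (d - 1) T1" unfolding T1_def[abs_def]
      by (intro is_boundary_sum is_boundary_scale is_boundary_cone_wall1) simp
    show "is_boundary (complex_P d) (d - 1) T2" unfolding T2_def[abs_def]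
      by (intro is_boundary_sum is_boundary_scale is_boundary_cone_wall2) simp
  qed
  moreover have "bd (complex_P d) (cone_off_walls z) \<tau> + (T1 \<tau> + T2 \<tau>)
      = z \<tau> - wall_functional z * ?A \<tau>" for \<tau>
  proof -
    have "T1 \<tau> = (\<Sum>i=1..Suc d. z (wall1 d i) * simplex_bd (insert 0 (wall1 d i)) \<tau>)
        - (\<Sum>i=1..Suc d. wall_sign ^ (i - 1) * z (wall1 d i)) * ?A \<tau>"
      unfolding T1_def sum_distrib_right sum_subtractf[symmetric]
      by (intro sum.cong refl) (simp add: algebra_simps)
    moreover have "T2 \<tau> = (\<Sum>i=1..d. z (wall2 d i) * simplex_bd (insert 0 (wall2 d i)) \<tau>)
        + (\<Sum>i=1..d. wall_sign ^ i * z (wall2 d i)) * ?A \<tau>"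
      unfolding T2_def sum_distrib_right sum.distrib[symmetric]
      by (intro sum.cong refl) (simp add: algebra_simps)
    moreover note fun_cong[OF cycle_cone_decomposition[OF z], of \<tau>]
    ultimately show ?thesis unfolding wall_functional_def by (simp add: algebra_simps)
  qed
  ultimately show ?thesis by simp
qed

lemma simplex_a_notin_complex_P: "simplex_a d \<notin> complex_P d"
proof
  assume "simplex_a d \<in> complex_P d"
  then show False
  proof (cases rule: complex_P_cases)
    case 1
    then show False unfolding simplex_a_def by simp
  next
    case 2
    then show False using card_simplex_a two_le_d by simp
  next
    case (3 F)
    then have "F = simplex_a d - {0}" by simp
    then have "wall1 d 1 \<subseteq> F" unfolding wall1_1 simplex_a_def by auto
    moreover have "is_wall d (wall1 d 1)" unfolding is_wall_def by auto
    ultimately show False using 3(4) by blast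
  qed
qed

lemma proper_face_simplex_a_in_complex_P:
  assumes F: "F \<subseteq> simplex_a d" "F \<noteq> {}" "F \<noteq> simplex_a d"
  shows "F \<in> complex_P d"
proof -
  have junction: "G \<in> base_complex d" if "G \<subseteq> simplex_a d - {0}" "G \<noteq> {}" for G
  proof -
    have "G \<subseteq> junction d" using that(1) unfolding simplex_a_def junction_def by auto
    then show ?thesis using that(2) junction_in_base_complex unfolding base_complex_def by blast
  qed
  show ?thesis
  proof (cases "0 \<in> F")
    case False
    then show ?thesis using F junction base_complex_subset_complex_P by blast
  next
    case True
    show ?thesis
    proof (cases "F = {0}")
      case False
      then have G: "F - {0} \<subseteq> simplex_a d - {0}" "F - {0} \<noteq> {}" using F(1) \<open>0 \<in> F\<close> by auto
      have "F - {0} \<subset> simplex_a d - {0}" using F(1,3) \<open>0 \<in> F\<close> by auto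
      then have card: "card (F - {0}) < d"
        using psubset_card_mono[of "simplex_a d - {0}"] card_simplex_a
        by (simp add: simplex_a_def)
      have "\<not> H \<subseteq> F - {0}" if "is_wall d H" for H
      proof
        assume "H \<subseteq> F - {0}"
        then have "card H \<le> card (F - {0})" using F(1) by (intro card_mono) (auto intro: finite_subset)
        then show False using card card_wall[OF that] by simp
      qed
      moreover have "F = insert 0 (F - {0})" using \<open>0 \<in> F\<close> by auto
      ultimately show ?thesis using junction[OF G] unfolding complex_P_def by blast
    qed (simp add: complex_P_def)
  qed
qed

lemma induced_simplex_boundary_simplex_a: "induced_simplex_boundary (complex_P d) d (simplex_a d)"
  unfolding induced_simplex_boundary_def
  using card_simplex_a simplex_a_notin_complex_P proper_face_simplex_a_in_complex_P by simp

lemma simplex_b_notin_complex_P: "simplex_b d \<notin> complex_P d"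
proof
  assume b: "simplex_b d \<in> complex_P d"
  have verts: "Suc d \<in> simplex_b d" "d + 2 \<in> simplex_b d" "Suc (2 * d) \<in> simplex_b d"
    "0 \<notin> simplex_b d"
    unfolding simplex_b_def using two_le_d by auto
  from b card_simplex_b show False
  proof (cases rule: complex_P_top_simplex_cases)
    case (1 i)
    then show False using verts(1) Suc_d_notin_chamber1 by simp
  next
    case (2 i)
    then show False using verts(2) notin_chamber2 by simp
  next
    case 3
    then show False using verts(3) two_le_d unfolding junction_def by simp
  next
    case (4 F)
    then show False using verts(4) by simp
  qed
qed

lemma proper_face_simplex_b_in_complex_P:
  assumes F: "F \<subseteq> simplex_b d" "F \<noteq> {}" "F \<noteq> simplex_b d"
  shows "F \<in> complex_P d"
proof -
  obtain v where v: "v \<in> simplex_b d" "v \<notin> F" using F(1,3) by blast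
  then have "simplex_b d - {v} \<in> base_facets d" unfolding base_facets_def by blast
  moreover have "F \<subseteq> simplex_b d - {v}" using F(1) v(2) by blast
  ultimately have "F \<in> base_complex d" using F(2) by (rule facet_in_base_complex)
  then show ?thesis using base_complex_subset_complex_P by blast
qed

lemma induced_simplex_boundary_simplex_b: "induced_simplex_boundary (complex_P d) d (simplex_b d)"
  unfolding induced_simplex_boundary_def
  using card_simplex_b simplex_b_notin_complex_P proper_face_simplex_b_in_complex_P by simp

lemma is_cycle_simplex_bd_induced:
  assumes "induced_simplex_boundary (complex_P d) d X"
  shows "is_cycle (complex_P d) (d - 1) (simplex_bd X)"
proof -
  have fin: "finite X" and card: "card X = Suc d"
    and faces: "\<And>F. F \<subseteq> X \<Longrightarrow> F \<noteq> {} \<Longrightarrow> F \<noteq> X \<Longrightarrow> F \<in> complex_P d"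
    using assms unfolding induced_simplex_boundary_def by blast+
  have X: "finite X" "card X = Suc (Suc (d - 1))" using fin card two_le_d by simp_all
  have facets: "X - {v} \<in> complex_P d" if "v \<in> X" for v
  proof -
    have "card (X - {v}) = Suc (d - 1)" using X that by simp
    then have "X - {v} \<noteq> {}" by (metis card.empty nat.distinct(1))
    moreover have "X - {v} \<noteq> X" using that by blast
    ultimately show ?thesis using faces[of "X - {v}"] by blast
  qed
  have "1 \<le> d - 1" using two_le_d by simp
  from is_cycle_simplex_bd[OF simplicial_complex_complex_P X this facets] show ?thesis .
qed

lemma presented_simplex_a_simplex_b:
  "presented_2a_eq_b (complex_P d) (d - 1) (simplex_bd (simplex_a d)) (simplex_bd (simplex_b d))"
proof -
  let ?a = "simplex_bd (simplex_a d)" and ?b = "simplex_bd (simplex_b d)"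
  have a: "is_cycle (complex_P d) (d - 1) ?a" and b: "is_cycle (complex_P d) (d - 1) ?b"
    using is_cycle_simplex_bd_induced induced_simplex_boundary_simplex_a
      induced_simplex_boundary_simplex_b by blast+
  have generate: "homologous (complex_P d) (d - 1) z (\<lambda>\<tau>. wall_functional z * ?a \<tau> + 0 * ?b \<tau>)"
    if z: "is_cycle (complex_P d) (d - 1) z" for z
  proof -
    have "is_cycle (complex_P d) (d - 1) (\<lambda>\<tau>. wall_functional z * ?a \<tau> + 0 * ?b \<tau>)"
      by (rule is_cycle_lincomb[OF a b])
    with z is_boundary_cycle_diff_simplex_a[OF z] show ?thesis unfolding homologous_def by simp
  qed
  have relations: "is_boundary (complex_P d) (d - 1) (\<lambda>\<tau>. m * ?a \<tau> + n * ?b \<tau>)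
      \<longleftrightarrow> (\<exists>j. m = 2 * j \<and> n = - j)" for m n
  proof
    assume "is_boundary (complex_P d) (d - 1) (\<lambda>\<tau>. m * ?a \<tau> + n * ?b \<tau>)"
    from wall_functional_boundary[OF this] have "m + 2 * n = 0"
      by (simp add: wall_functional_lincomb wall_functional_simplex_a wall_functional_simplex_b)
    then show "\<exists>j. m = 2 * j \<and> n = - j" by (intro exI[of _ "- n"]) simp
  next
    assume "\<exists>j. m = 2 * j \<and> n = - j"
    then obtain j where j: "m = 2 * j" "n = - j" by blast
    have "is_boundary (complex_P d) (d - 1) (\<lambda>\<tau>. (- j) * (?b \<tau> - wall_functional ?b * ?a \<tau>))"
      by (intro is_boundary_scale is_boundary_cycle_diff_simplex_a b)
    then show "is_boundary (complex_P d) (d - 1) (\<lambda>\<tau>. m * ?a \<tau> + n * ?b \<tau>)"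
      unfolding j wall_functional_simplex_b by (simp add: algebra_simps)
  qed
  show ?thesis unfolding presented_2a_eq_b_def using a b generate relations by blast
qed

end

theorem lemma11:
  fixes d :: nat
  assumes "d \<ge> 2"
  shows "\<exists>P za zb vsa vsb. simplicial_complex P \<and>
           presented_2a_eq_b P (d - 1) za zb \<and>
           coherently_represented P d za vsa \<and> coherently_represented P d zb vsb \<and>
           set vsa \<inter> set vsb = {}"
proof -
  interpret dim_ge_2 d using assms by unfold_locales
  have ab: "simplex_a d = {0..<Suc d}" "simplex_b d = {Suc d..<2 * d + 2}"
    unfolding simplex_a_def simplex_b_def by auto
  have "coherently_represented (complex_P d) d (simplex_bd (simplex_a d)) [0..<Suc d]"
    using coherently_represented_upt[OF induced_simplex_boundary_simplex_a[unfolded ab(1)]]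
      is_cycle_simplex_bd_induced[OF induced_simplex_boundary_simplex_a] ab(1) by simp
  moreover have "coherently_represented (complex_P d) d (simplex_bd (simplex_b d)) [Suc d..<2 * d + 2]"
    using coherently_represented_upt[OF induced_simplex_boundary_simplex_b[unfolded ab(2)]]
      is_cycle_simplex_bd_induced[OF induced_simplex_boundary_simplex_b] ab(2) by simp
  moreover have "set [0..<Suc d] \<inter> set [Suc d..<2 * d + 2] = {}" by auto
  ultimately show ?thesis
    using simplicial_complex_complex_P presented_simplex_a_simplex_b by blast
qed

end
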